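(* Let $L$ be a link. For every $n \ge 2$, $\beta_2(L) \le \beta_n(L)$.
   Context: An $n$-crossing ($n\ge 2$) in a link projection is a point where $n$ strands meet, each bisecting the crossing, with the strands assigned distinct levels $1,\dots,n$ (level $1$ on top) recording their heights. An $m$-string $n$-crossing braid is a braid diagram on $m$ strings all of whose crossings are $n$-crossings; each such crossing involves strings in consecutive positions $j,\dots,j+n-1$ and reverses their order. A $2$-crossing braid is an ordinary braid. The $n$-crossing braid index $\beta_n(L)$ is the minimum number of strings of an $n$-crossing braid whose closure is isotopic to $L$, and $\beta_n(L)=\infty$ if no such braid exists. Thus $\beta_2(L)$ is the usual braid index. *)

theory Defs
  imports "HOL-Analysis.Analysis" "HOL-Library.Extended_Nat"
begin

type_synonym pt3 = "real \<times> real \<times> real"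

definition is_link :: "pt3 set \<Rightarrow> bool" where
  "is_link L \<longleftrightarrow> (\<exists>(k::nat) (c :: nat \<Rightarrow> real \<Rightarrow> pt3). k \<ge> 1 \<and>
      (\<forall>i<k. simple_path (c i) \<and> pathfinish (c i) = pathstart (c i)) \<and>
      (\<forall>i<k. \<forall>j<k. i \<noteq> j \<longrightarrow> path_image (c i) \<inter> path_image (c j) = {}) \<and>
      L = (\<Union>i<k. path_image (c i)))"

definition isotopic :: "pt3 set \<Rightarrow> pt3 set \<Rightarrow> bool" where
  "isotopic L L' \<longleftrightarrow> (\<exists>H :: real \<times> pt3 \<Rightarrow> pt3.
      continuous_on ({0..1} \<times> UNIV) H \<and>
      (\<forall>t\<in>{0..1}. \<exists>g. homeomorphism UNIV UNIV (\<lambda>x. H (t, x)) g) \<and>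
      (\<forall>x. H (0, x) = x) \<and>
      (\<lambda>x. H (1, x)) ` L = L')"

text \<open>A geometric m-string braid: string i is t \<mapsto> (t, x_i(t), z_i(t)), where
  x is the position coordinate (seen in the projection) and z the height.
  We require x > 0 so that the braid can be closed by rotating around the z-axis.\<close>
definition geom_braid :: "nat \<Rightarrow> (nat \<Rightarrow> real \<Rightarrow> real \<times> real) \<Rightarrow> bool" where
  "geom_braid m s \<longleftrightarrow> m \<ge> 1 \<and>
     (\<forall>i<m. continuous_on {0..1} (s i)) \<and>
     (\<forall>i<m. \<forall>t\<in>{0..1}. fst (s i t) > 0) \<and>
     (\<forall>i<m. \<forall>j<m. i \<noteq> j \<longrightarrow> (\<forall>t\<in>{0..1}. s i t \<noteq> s j t)) \<and>
     (\<lambda>i. s i 0) ` {..<m} = (\<lambda>i. s i 1) ` {..<m}"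

definition wrap :: "real \<Rightarrow> real \<times> real \<Rightarrow> pt3" where
  "wrap t p = (fst p * cos (2 * pi * t), fst p * sin (2 * pi * t), snd p)"

text \<open>The closure of the braid, as a subset of R^3; its projection to the plane
  of the first two coordinates is the closed braid diagram.\<close>
definition braid_closure :: "nat \<Rightarrow> (nat \<Rightarrow> real \<Rightarrow> real \<times> real) \<Rightarrow> pt3 set" where
  "braid_closure m s = (\<Union>i<m. (\<lambda>t. wrap t (s i t)) ` {0..1})"

definition crossing_times :: "nat \<Rightarrow> (nat \<Rightarrow> real \<Rightarrow> real \<times> real) \<Rightarrow> real set" where
  "crossing_times m s = {t\<in>{0..1}. \<exists>i<m. \<exists>j<m. i \<noteq> j \<and> fst (s i t) = fst (s j t)}"

definition strands_at :: "nat \<Rightarrow> (nat \<Rightarrow> real \<Rightarrow> real \<times> real) \<Rightarrow> real \<Rightarrow> real \<Rightarrow> nat set" where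
  "strands_at m s t x = {i. i < m \<and> fst (s i t) = x}"

text \<open>An m-string n-crossing braid: finitely many crossings, all in the interior;
  at each crossing point exactly n strands meet (with distinct heights, i.e. levels,
  automatically by disjointness of strings); just before the crossing these strands
  occupy consecutive positions (no other strand lies between them) and their order is
  reversed just after the crossing (each strand passes through the crossing).\<close>
definition n_crossing_braid :: "nat \<Rightarrow> nat \<Rightarrow> (nat \<Rightarrow> real \<Rightarrow> real \<times> real) \<Rightarrow> bool" where
  "n_crossing_braid n m s \<longleftrightarrow> geom_braid m s \<and>
     finite (crossing_times m s) \<and> crossing_times m s \<subseteq> {0<..<1} \<and>
     (\<forall>t\<in>crossing_times m s. \<forall>x. let I = strands_at m s t x in
        card I \<ge> 2 \<longrightarrow>
        (card I = n \<and>
         (\<exists>\<epsilon>>0. \<forall>t1\<in>{t-\<epsilon><..<t}. \<forall>t2\<in>{t<..<t+\<epsilon>}.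
            (\<forall>i\<in>I. \<forall>j\<in>I. fst (s i t1) < fst (s j t1) \<longleftrightarrow> fst (s j t2) < fst (s i t2)) \<and>
            (\<forall>k<m. k \<notin> I \<longrightarrow>
               ((\<forall>i\<in>I. fst (s k t1) < fst (s i t1)) \<or> (\<forall>i\<in>I. fst (s i t1) < fst (s k t1))) \<and>
               ((\<forall>i\<in>I. fst (s k t2) < fst (s i t2)) \<or> (\<forall>i\<in>I. fst (s i t2) < fst (s k t2)))))))"

text \<open>The n-crossing braid index (infinity if no such braid exists).\<close>
definition crossing_braid_index :: "nat \<Rightarrow> pt3 set \<Rightarrow> enat" where
  "crossing_braid_index n L =
     Inf {enat m | m. \<exists>s. n_crossing_braid n m s \<and> isotopic (braid_closure m s) L}"

end

theory Submission
  imports Defs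
begin

text \<open>An \<open>n\<close>-crossing braid is in particular a braid whose crossings, of any multiplicity,
  reverse the order of the strands meeting there. A crossing of \<open>k \<ge> 3\<close> strands at \<open>(t0, x0)\<close>
  can be resolved into \<open>2\<close>-crossings without adding strings: near \<open>t0\<close>, move the \<open>j\<close>-th of
  these strands (in their order before \<open>t0\<close>) onto the line through \<open>x0 + a j\<^sup>2 h\<close> of slope
  \<open>-a j\<close>; lines \<open>i\<close> and \<open>j\<close> then cross at time \<open>t0 + (i + j) h\<close>, so no three of them meet.
  The move is a radial displacement \<open>\<rho> \<mapsto> \<rho> + \<psi>(\<theta>, \<rho>, z)\<close> of the closed braid around its
  axis, with \<open>\<psi>\<close> vanishing near the axis and \<open>1/2\<close>-Lipschitz in \<open>\<rho>\<close>; its stages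
  \<open>\<rho> \<mapsto> \<rho> + \<tau> \<psi>\<close> are bijective, hence homeomorphisms of \<open>\<real>\<^sup>3\<close> by invariance of domain,
  so the closure only changes by an ambient isotopy. Induction on the number of multiple
  crossings yields a \<open>2\<close>-crossing braid with the same number of strings and isotopic closure.\<close>

section \<open>Ambient isotopy\<close>

type_synonym braid = "nat \<Rightarrow> real \<Rightarrow> real \<times> real"

lemma isotopic_trans:
  assumes "isotopic A B" and "isotopic B C"
  shows "isotopic A C"
proof -
  obtain G :: "real \<times> pt3 \<Rightarrow> pt3" where G: "continuous_on ({0..1} \<times> UNIV) G"
    "\<And>t. t \<in> {0..1} \<Longrightarrow> \<exists>g. homeomorphism UNIV UNIV (\<lambda>x. G (t, x)) g"
    "\<And>x. G (0, x) = x" "(\<lambda>x. G (1, x)) ` A = B"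
    using assms(1) unfolding isotopic_def by blast
  obtain H :: "real \<times> pt3 \<Rightarrow> pt3" where H: "continuous_on ({0..1} \<times> UNIV) H"
    "\<And>t. t \<in> {0..1} \<Longrightarrow> \<exists>h. homeomorphism UNIV UNIV (\<lambda>x. H (t, x)) h"
    "\<And>x. H (0, x) = x" "(\<lambda>x. H (1, x)) ` B = C"
    using assms(2) unfolding isotopic_def by blast
  define K where "K q = H (fst q, G q)" for q
  have "continuous_on ({0..1} \<times> UNIV) K"
    unfolding K_def by (rule continuous_on_compose2[OF H(1)]) (auto intro!: continuous_intros G(1))
  moreover have "\<exists>k. homeomorphism UNIV UNIV (\<lambda>x. K (t, x)) k" if t: "t \<in> {0..1}" for t
  proof -
    obtain g h where "homeomorphism UNIV UNIV (\<lambda>x. G (t, x)) g" "homeomorphism UNIV UNIV (\<lambda>x. H (t, x)) h"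
      using G(2)[OF t] H(2)[OF t] by blast
    from homeomorphism_compose[OF this] show ?thesis
      unfolding K_def o_def by auto
  qed
  moreover have "(\<lambda>x. K (1, x)) ` A = (\<lambda>x. H (1, x)) ` (\<lambda>x. G (1, x)) ` A"
    unfolding K_def image_image by simp
  ultimately show ?thesis
    using G(3,4) H(3,4) unfolding isotopic_def K_def by auto
qed

lemma isotopic_refl: "isotopic A A"
  unfolding isotopic_def
  by (intro exI[of _ snd] conjI ballI allI exI[of _ id])
    (auto intro: continuous_intros simp: homeomorphism_def)

lemma braid_closure_cong:
  "(\<And>i t. i < m \<Longrightarrow> t \<in> {0..1} \<Longrightarrow> s i t = s' i t) \<Longrightarrow> braid_closure m s = braid_closure m s'"
  unfolding braid_closure_def by (intro SUP_cong image_cong) auto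

section \<open>Radial shifts around the axis of a closed braid\<close>

lemma cos_le_max_endpoints:
  assumes "\<alpha> \<le> \<theta>" "\<theta> \<le> \<beta>" "0 \<le> \<alpha>" "\<beta> \<le> 2*pi"
  shows "cos \<theta> \<le> max (cos \<alpha>) (cos \<beta>)"
proof (cases "\<theta> \<le> pi")
  case True
  then have "cos \<theta> \<le> cos \<alpha>" using assms by (intro cos_monotone_0_pi_le) auto
  then show ?thesis by simp
next
  case False
  have "cos (2*pi - \<theta>) \<le> cos (2*pi - \<beta>)" using assms False by (intro cos_monotone_0_pi_le) auto
  then show ?thesis by (simp add: cos_diff)
qed

lemma cos_less_1:
  assumes "0 < x" "x < 2*pi"
  shows "cos x < 1"
proof (cases "x \<le> pi")
  case True
  then have "cos x < cos 0" using assms by (intro cos_monotone_0_pi) auto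
  then show ?thesis by simp
next
  case False
  have "cos (2*pi - x) < cos 0" using assms False by (intro cos_monotone_0_pi) auto
  then show ?thesis by (simp add: cos_diff)
qed

definition horiz :: "pt3 \<Rightarrow> complex" where
  "horiz p = complex_of_real (fst p) + \<i> * complex_of_real (fst (snd p))"

lemma continuous_on_horiz: "continuous_on S horiz"
  unfolding horiz_def by (intro continuous_intros)

lemma Re_horiz [simp]: "Re (horiz p) = fst p"
  and Im_horiz [simp]: "Im (horiz p) = fst (snd p)"
  by (simp_all add: horiz_def)

lemma pt3_eq_iff: "p = q \<longleftrightarrow> horiz p = horiz q \<and> snd (snd p) = snd (snd q)"
  by (cases p, cases q) (auto simp: complex_eq_iff)

lemma horiz_scale: "horiz (a * fst p, a * fst (snd p), z) = complex_of_real a * horiz p"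
  by (simp add: complex_eq_iff)

lemma horiz_wrap: "horiz (wrap t (x, z)) = complex_of_real x * exp (\<i> * complex_of_real (2 * pi * t))"
  by (simp add: wrap_def complex_eq_iff cos_exp_eq sin_exp_eq Re_exp Im_exp)

lemma height_wrap [simp]: "snd (snd (wrap t p)) = snd p"
  by (simp add: wrap_def)

definition shift_braid :: "(real \<Rightarrow> real \<Rightarrow> real \<Rightarrow> real) \<Rightarrow> braid \<Rightarrow> braid" where
  "shift_braid \<psi> s i t = (fst (s i t) + \<psi> t (fst (s i t)) (snd (s i t)), snd (s i t))"

text \<open>\<open>\<psi> t \<rho> z\<close> is a radial displacement at the point with cylindrical coordinates
  \<open>(\<rho>, 2\<pi>t, z)\<close> around the axis of the braid closure. It vanishes near the axis and for angles
  near \<open>0\<close>, where \<open>Arg2pi\<close> jumps.\<close>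

locale radial_shift =
  fixes \<psi> :: "real \<Rightarrow> real \<Rightarrow> real \<Rightarrow> real" and b c d :: real
  assumes continuous_shift: "continuous_on UNIV (\<lambda>q. \<psi> (fst q) (fst (snd q)) (snd (snd q)))"
    and b_pos: "0 < b" and shift_eq_0_inner: "\<And>t x z. x \<le> b \<Longrightarrow> \<psi> t x z = 0"
    and c_pos: "0 < c" and c_le_d: "c \<le> d" and d_less_1: "d < 1"
    and shift_eq_0_outside: "\<And>t x z. t < c \<or> d < t \<Longrightarrow> \<psi> t x z = 0"
    and shift_lipschitz: "\<And>t x y z. \<bar>\<psi> t x z - \<psi> t y z\<bar> \<le> \<bar>x - y\<bar> / 2"
begin

lemma abs_shift_le: "\<bar>\<psi> t x z\<bar> \<le> \<bar>x - b\<bar> / 2"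
  using shift_lipschitz[of t x z b] shift_eq_0_inner[of b t z] by simp

lemma shifted_radius_pos:
  assumes "0 < x"
  shows "0 < x + \<psi> t x z"
proof (cases "x \<le> b")
  case False
  then show ?thesis using abs_shift_le[of t x z] b_pos by (simp add: abs_le_iff)
qed (use assms shift_eq_0_inner in simp)

lemma shifted_radius_inj:
  assumes "x + \<psi> t x z = y + \<psi> t y z"
  shows "x = y"
proof -
  have "\<bar>x - y\<bar> = \<bar>\<psi> t y z - \<psi> t x z\<bar>" using assms by (simp add: algebra_simps)
  also have "\<dots> \<le> \<bar>y - x\<bar> / 2" by (rule shift_lipschitz)
  finally show ?thesis by (simp add: abs_minus_commute)
qed

lemma continuous_on_shift_comp:
  assumes "continuous_on S f" "continuous_on S g" "continuous_on S h"
  shows "continuous_on S (\<lambda>p. \<psi> (f p) (g p) (h p))"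
  using continuous_on_compose2[OF continuous_shift continuous_on_Pair[OF assms(1) continuous_on_Pair[OF assms(2,3)]]]
  by simp

definition stretch :: "pt3 \<Rightarrow> real" where
  "stretch p = (if horiz p = 0 then 0 else
     \<psi> (Arg2pi (horiz p) / (2*pi)) (cmod (horiz p)) (snd (snd p)) / cmod (horiz p))"

definition push :: "real \<Rightarrow> pt3 \<Rightarrow> pt3" where
  "push \<tau> p = ((1 + \<tau> * stretch p) * fst p, (1 + \<tau> * stretch p) * fst (snd p), snd (snd p))"

lemma stretch_eq_0_near_axis: "cmod (horiz p) \<le> b \<Longrightarrow> stretch p = 0"
  using shift_eq_0_inner unfolding stretch_def by auto

lemma stretch_eq_0_near_positive_ray:
  obtains \<kappa> where "\<kappa> < 1" "\<And>p. \<kappa> * cmod (horiz p) < Re (horiz p) \<Longrightarrow> stretch p = 0"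
proof
  define \<kappa> where "\<kappa> = max (cos (2 * pi * c)) (cos (2 * pi * d))"
  show "\<kappa> < 1"
    unfolding \<kappa>_def using c_pos c_le_d d_less_1 by (auto intro!: cos_less_1)
  fix p assume p: "\<kappa> * cmod (horiz p) < Re (horiz p)"
  show "stretch p = 0"
  proof (cases "horiz p = 0")
    case False
    let ?\<theta> = "Arg2pi (horiz p)"
    have "cmod (horiz p) * cos ?\<theta> = Re (horiz p)" by (rule cos_Arg2pi)
    with p False have "\<kappa> < cos ?\<theta>"
      by (metis mult.commute mult_less_cancel_left_pos zero_less_norm_iff)
    moreover have "cos ?\<theta> \<le> \<kappa>" if "c \<le> ?\<theta> / (2*pi)" "?\<theta> / (2*pi) \<le> d"
      unfolding \<kappa>_def using that c_pos d_less_1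
      by (intro cos_le_max_endpoints) (auto simp: field_simps)
    ultimately have "?\<theta> / (2*pi) < c \<or> d < ?\<theta> / (2*pi)" by linarith
    then show ?thesis unfolding stretch_def using shift_eq_0_outside by simp
  qed (simp add: stretch_def)
qed

lemma continuous_on_stretch_off_ray:
  "continuous_on ({p. b/2 < cmod (horiz p)} \<inter> horiz -` (- \<real>\<^sub>\<ge>\<^sub>0)) stretch"
  (is "continuous_on ?U _")
proof (rule continuous_on_eq)
  have cmod_horiz: "continuous_on ?U (\<lambda>p. cmod (horiz p))"
    by (intro continuous_on_norm continuous_on_horiz)
  have "continuous_on ?U (\<lambda>p. Arg2pi (horiz p))"
  proof (rule continuous_on_compose2[OF _ continuous_on_horiz])
    show "continuous_on (- \<real>\<^sub>\<ge>\<^sub>0) Arg2pi"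
      by (simp add: continuous_at_Arg2pi continuous_at_imp_continuous_on)
  qed auto
  then have "continuous_on ?U (\<lambda>p. \<psi> (Arg2pi (horiz p) / (2*pi)) (cmod (horiz p)) (snd (snd p)))"
    by (intro continuous_on_shift_comp cmod_horiz continuous_on_divide continuous_on_const)
      (auto intro!: continuous_intros)
  then show "continuous_on ?U (\<lambda>p. \<psi> (Arg2pi (horiz p) / (2*pi)) (cmod (horiz p)) (snd (snd p)) / cmod (horiz p))"
    using b_pos by (intro continuous_on_divide cmod_horiz) auto
qed (use b_pos in \<open>auto simp: stretch_def\<close>)

lemma continuous_on_stretch: "continuous_on UNIV stretch"
proof -
  obtain \<kappa> where \<kappa>: "\<kappa> < 1" "\<And>p. \<kappa> * cmod (horiz p) < Re (horiz p) \<Longrightarrow> stretch p = 0"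
    using stretch_eq_0_near_positive_ray by blast
  have cmod_horiz: "continuous_on UNIV (\<lambda>p. cmod (horiz p))"
    by (intro continuous_on_norm continuous_on_horiz)
  define U1 where "U1 = {p. cmod (horiz p) < b}"
  define U2 where "U2 = {p. b/2 < cmod (horiz p)} \<inter> horiz -` (- \<real>\<^sub>\<ge>\<^sub>0)"
  define U3 where "U3 = {p. \<kappa> * cmod (horiz p) < Re (horiz p)}"
  have "open U1" "open U3"
    unfolding U1_def U3_def using cmod_horiz continuous_on_horiz
    by (auto intro!: open_Collect_less continuous_intros)
  moreover have "open U2"
    unfolding U2_def using cmod_horiz continuous_on_horiz
    by (intro open_Int open_Collect_less open_vimage) (auto intro: continuous_intros)
  moreover have "continuous_on U1 stretch"
    by (rule continuous_on_eq[where f="\<lambda>_. 0"]) (auto simp: U1_def intro!: stretch_eq_0_near_axis)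
  moreover have "continuous_on U3 stretch"
    by (rule continuous_on_eq[where f="\<lambda>_. 0"]) (auto simp: U3_def \<kappa>(2))
  moreover have "continuous_on U2 stretch"
    unfolding U2_def by (rule continuous_on_stretch_off_ray)
  moreover have "p \<in> U1 \<union> U2 \<union> U3" for p
  proof (cases "b \<le> cmod (horiz p) \<and> horiz p \<in> \<real>\<^sub>\<ge>\<^sub>0")
    case True
    then have "Re (horiz p) = cmod (horiz p)" "0 < cmod (horiz p)"
      using b_pos by (auto simp: complex_nonneg_Reals_iff cmod_eq_Re)
    then show ?thesis using \<kappa>(1) by (simp add: U3_def)
  qed (use b_pos in \<open>auto simp: U1_def U2_def\<close>)
  ultimately show ?thesis
    by (metis UNIV_eq_I continuous_on_open_Un open_Un)
qed

lemma abs_stretch_le: "\<bar>stretch p\<bar> \<le> 1/2"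
proof (cases "cmod (horiz p) \<le> b")
  case False
  let ?\<rho> = "cmod (horiz p)"
  have "\<bar>\<psi> (Arg2pi (horiz p) / (2*pi)) ?\<rho> (snd (snd p))\<bar> \<le> \<bar>?\<rho> - b\<bar> / 2" by (rule abs_shift_le)
  also have "\<dots> \<le> ?\<rho> / 2" using False b_pos by simp
  finally show ?thesis using False b_pos by (auto simp: stretch_def abs_divide divide_le_eq)
qed (simp add: stretch_eq_0_near_axis)

lemma stretch_factor_pos:
  assumes "\<tau> \<in> {0..1}"
  shows "0 < 1 + \<tau> * stretch p"
proof -
  have "\<bar>\<tau> * stretch p\<bar> \<le> 1 * (1/2)"
    unfolding abs_mult using assms abs_stretch_le[of p] by (intro mult_mono) auto
  then show ?thesis by (simp add: abs_le_iff)
qed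

lemma horiz_push: "horiz (push \<tau> p) = complex_of_real (1 + \<tau> * stretch p) * horiz p"
  unfolding push_def by (rule horiz_scale)

lemma height_push [simp]: "snd (snd (push \<tau> p)) = snd (snd p)"
  by (simp add: push_def)

lemma push_0 [simp]: "push 0 p = p"
  by (cases p) (simp add: push_def)

lemma continuous_on_push: "continuous_on ({0..1} \<times> UNIV) (\<lambda>q. push (fst q) (snd q))"
proof -
  have "continuous_on ({0..1} \<times> UNIV) (\<lambda>q. stretch (snd q))"
    by (rule continuous_on_compose2[OF continuous_on_stretch]) (auto intro: continuous_intros)
  then show ?thesis
    unfolding push_def by (intro continuous_intros)
qed

lemma pushed_radius:
  assumes "horiz p \<noteq> 0"
  shows "cmod (horiz p) * (1 + \<tau> * stretch p)
    = cmod (horiz p) + \<tau> * \<psi> (Arg2pi (horiz p) / (2*pi)) (cmod (horiz p)) (snd (snd p))"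
  using assms by (simp add: stretch_def field_simps)

lemma inj_push:
  assumes \<tau>: "\<tau> \<in> {0..1}"
  shows "inj (push \<tau>)"
proof (rule injI)
  fix p q assume eq: "push \<tau> p = push \<tau> q"
  define \<alpha> where "\<alpha> = 1 + \<tau> * stretch p"
  define \<beta> where "\<beta> = 1 + \<tau> * stretch q"
  have pos: "\<alpha> > 0" "\<beta> > 0" unfolding \<alpha>_def \<beta>_def using stretch_factor_pos \<tau> by auto
  have z: "snd (snd p) = snd (snd q)" using arg_cong[OF eq, of "\<lambda>x. snd (snd x)"] by simp
  have h: "complex_of_real \<alpha> * horiz p = complex_of_real \<beta> * horiz q"
    using arg_cong[OF eq, of horiz] by (simp add: horiz_push \<alpha>_def \<beta>_def)
  show "p = q"
  proof (cases "horiz p = 0")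
    case True
    then show ?thesis using h pos z pt3_eq_iff by auto
  next
    case False
    then have q0: "horiz q \<noteq> 0" using h pos by auto
    let ?t = "Arg2pi (horiz p) / (2*pi)" and ?z = "snd (snd p)"
    let ?\<rho> = "cmod (horiz p)" and ?\<sigma> = "cmod (horiz q)"
    have "Arg2pi (horiz p) = Arg2pi (horiz q)"
      using h pos Arg2pi_times_of_real by metis
    moreover have radii: "?\<rho> * \<alpha> = ?\<sigma> * \<beta>"
      using arg_cong[OF h, of cmod] pos by (simp add: norm_mult mult.commute)
    ultimately have "?\<rho> + \<tau> * \<psi> ?t ?\<rho> ?z = ?\<sigma> + \<tau> * \<psi> ?t ?\<sigma> ?z"
      using pushed_radius[OF False, of \<tau>] pushed_radius[OF q0, of \<tau>] z by (simp add: \<alpha>_def \<beta>_def)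
    then have "?\<rho> - ?\<sigma> = \<tau> * (\<psi> ?t ?\<sigma> ?z - \<psi> ?t ?\<rho> ?z)"
      by (simp add: algebra_simps)
    then have "\<bar>?\<rho> - ?\<sigma>\<bar> = \<tau> * \<bar>\<psi> ?t ?\<rho> ?z - \<psi> ?t ?\<sigma> ?z\<bar>"
      using \<tau> by (simp add: abs_mult abs_minus_commute)
    also have "\<dots> \<le> 1 * (\<bar>?\<rho> - ?\<sigma>\<bar> / 2)"
      using \<tau> shift_lipschitz by (intro mult_mono) auto
    finally have "?\<rho> = ?\<sigma>" by simp
    then have "\<alpha> = \<beta>" using radii False q0 by simp
    then have "horiz p = horiz q" using h pos by simp
    then show ?thesis using z pt3_eq_iff by auto
  qed
qed

lemma shifted_radius_surj:
  assumes "\<tau> \<in> {0..1}" "b < \<sigma>"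
  shows "\<exists>\<rho>\<ge>b. \<rho> + \<tau> * \<psi> t \<rho> z = \<sigma>"
proof -
  define f where "f \<rho> = \<rho> + \<tau> * \<psi> t \<rho> z" for \<rho>
  have "continuous_on {b..2 * \<sigma>} (\<lambda>\<rho>. \<psi> t \<rho> z)"
    by (intro continuous_on_shift_comp continuous_on_const continuous_on_id)
  then have cont: "continuous_on {b..2 * \<sigma>} f"
    unfolding f_def by (intro continuous_intros)
  have low: "f b \<le> \<sigma>" using assms(2) shift_eq_0_inner by (simp add: f_def)
  have "\<bar>\<tau> * \<psi> t (2 * \<sigma>) z\<bar> \<le> 1 * (\<bar>2 * \<sigma> - b\<bar> / 2)"
    unfolding abs_mult using assms(1) abs_shift_le by (intro mult_mono) auto
  then have high: "\<sigma> \<le> f (2 * \<sigma>)" using assms(2) b_pos by (simp add: f_def abs_le_iff)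
  have "b \<le> 2 * \<sigma>" using assms(2) b_pos by simp
  from IVT'[OF low high this cont] show ?thesis
    unfolding f_def by blast
qed

lemma surj_push:
  assumes \<tau>: "\<tau> \<in> {0..1}"
  shows "surj (push \<tau>)"
proof -
  have "q \<in> range (push \<tau>)" for q
  proof (cases "cmod (horiz q) \<le> b")
    case True
    then have "push \<tau> q = q" by (cases q) (simp add: push_def stretch_eq_0_near_axis)
    then show ?thesis by (metis rangeI)
  next
    case False
    let ?\<sigma> = "cmod (horiz q)" and ?t = "Arg2pi (horiz q) / (2*pi)" and ?z = "snd (snd q)"
    obtain \<rho> where \<rho>: "b \<le> \<rho>" "\<rho> + \<tau> * \<psi> ?t \<rho> ?z = ?\<sigma>"
      using shifted_radius_surj[OF \<tau>, of ?\<sigma> ?t ?z] False by auto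
    have \<sigma>: "0 < ?\<sigma>" and \<rho>_pos: "0 < \<rho>" using False \<rho>(1) b_pos by linarith+
    define p where "p = ((\<rho> / ?\<sigma>) * fst q, (\<rho> / ?\<sigma>) * fst (snd q), ?z)"
    have hp: "horiz p = complex_of_real (\<rho> / ?\<sigma>) * horiz q"
      unfolding p_def by (rule horiz_scale)
    then have "horiz p \<noteq> 0" "cmod (horiz p) = \<rho>" "Arg2pi (horiz p) = Arg2pi (horiz q)"
      using \<rho>_pos \<sigma> by (auto simp: norm_mult norm_divide)
    then have "\<rho> * (1 + \<tau> * stretch p) = ?\<sigma>"
      using pushed_radius[of p \<tau>] \<rho>(2) by (simp add: p_def)
    then have "(1 + \<tau> * stretch p) * (\<rho> / ?\<sigma>) = 1" using \<sigma> by (simp add: field_simps)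
    moreover have "horiz (push \<tau> p) = complex_of_real ((1 + \<tau> * stretch p) * (\<rho> / ?\<sigma>)) * horiz q"
      unfolding horiz_push hp of_real_mult by (simp only: mult.assoc)
    ultimately have "horiz (push \<tau> p) = horiz q" by (metis mult_1 of_real_1)
    then have "push \<tau> p = q" using pt3_eq_iff by (simp add: p_def)
    then show ?thesis by (metis rangeI)
  qed
  then show ?thesis by auto
qed

lemma homeomorphism_push:
  assumes "\<tau> \<in> {0..1}"
  shows "\<exists>g. homeomorphism UNIV UNIV (push \<tau>) g"
proof -
  have "continuous_on UNIV (push \<tau>)"
    by (rule continuous_on_compose2[OF continuous_on_push, of _ "\<lambda>p. (\<tau>, p)", simplified])
      (use assms in \<open>auto intro: continuous_intros\<close>)
  then obtain g where "homeomorphism UNIV (range (push \<tau>)) (push \<tau>) g"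
    using invariance_of_domain_homeomorphism[of UNIV "push \<tau>"] inj_push[OF assms] by auto
  then show ?thesis using surj_push[OF assms] by auto
qed

lemma push_wrap:
  assumes t: "t \<in> {0..1}" and x: "x > 0"
  shows "push 1 (wrap t (x, z)) = wrap t (x + \<psi> t x z, z)"
proof (cases "t < 1")
  case True
  have "Arg2pi (horiz (wrap t (x, z))) = 2 * pi * t"
    unfolding horiz_wrap using t True x by (intro Arg2pi_unique) auto
  moreover have "cmod (horiz (wrap t (x, z))) = x"
    unfolding horiz_wrap using x by (simp add: norm_mult)
  ultimately have "stretch (wrap t (x, z)) = \<psi> t x z / x"
    using x unfolding stretch_def by auto
  then show ?thesis using x by (simp add: push_def wrap_def field_simps)
next
  case False
  then have "t = 1" using t by simp
  moreover have "Arg2pi (horiz (wrap 1 (x, z))) = 0"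
    unfolding horiz_wrap using x by (intro Arg2pi_unique[of x]) (auto simp: exp_eq_1)
  ultimately show ?thesis
    using shift_eq_0_outside c_pos d_less_1 by (simp add: push_def stretch_def wrap_def)
qed

lemma push_braid_closure:
  assumes "\<And>i t. i < m \<Longrightarrow> t \<in> {0..1} \<Longrightarrow> fst (s i t) > 0"
  shows "push 1 ` braid_closure m s = braid_closure m (shift_braid \<psi> s)"
  unfolding braid_closure_def image_UN image_image
proof (intro SUP_cong image_cong refl)
  fix i t assume "i \<in> {..<m}" "t \<in> {0..1::real}"
  then show "push 1 (wrap t (s i t)) = wrap t (shift_braid \<psi> s i t)"
    using push_wrap[of t "fst (s i t)" "snd (s i t)"] assms by (simp add: shift_braid_def)
qed

lemma isotopic_shift_braid:
  assumes "\<And>i t. i < m \<Longrightarrow> t \<in> {0..1} \<Longrightarrow> fst (s i t) > 0"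
  shows "isotopic (braid_closure m s) (braid_closure m (shift_braid \<psi> s))"
proof -
  have "push 1 ` braid_closure m s = braid_closure m (shift_braid \<psi> s)"
    using assms by (rule push_braid_closure)
  then show ?thesis
    unfolding isotopic_def using continuous_on_push homeomorphism_push
    by (intro exI[of _ "\<lambda>q. push (fst q) (snd q)"]) simp
qed

lemma geom_braid_shift_braid:
  assumes "geom_braid m s"
  shows "geom_braid m (shift_braid \<psi> s)"
  unfolding geom_braid_def
proof (intro conjI allI impI ballI)
  show "1 \<le> m" using assms by (simp add: geom_braid_def)
next
  fix i assume "i < m"
  then have "continuous_on {0..1} (s i)" using assms by (simp add: geom_braid_def)
  then have "continuous_on {0..1} (\<lambda>t. fst (s i t))" "continuous_on {0..1} (\<lambda>t. snd (s i t))"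
    by (auto intro: continuous_on_fst continuous_on_snd)
  moreover from this have "continuous_on {0..1} (\<lambda>t. \<psi> t (fst (s i t)) (snd (s i t)))"
    by (intro continuous_on_shift_comp continuous_on_id)
  ultimately show "continuous_on {0..1} (shift_braid \<psi> s i)"
    unfolding shift_braid_def by (intro continuous_on_Pair continuous_on_add)
next
  fix i and t :: real assume "i < m" "t \<in> {0..1}"
  then show "0 < fst (shift_braid \<psi> s i t)"
    using assms shifted_radius_pos by (simp add: geom_braid_def shift_braid_def)
next
  fix i j and t :: real assume ij: "i < m" "j < m" "i \<noteq> j" and t: "t \<in> {0..1}"
  show "shift_braid \<psi> s i t \<noteq> shift_braid \<psi> s j t"
  proof
    assume eq: "shift_braid \<psi> s i t = shift_braid \<psi> s j t"
    then have "snd (s i t) = snd (s j t)" by (simp add: shift_braid_def)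
    moreover from this eq have "fst (s i t) = fst (s j t)"
      using shifted_radius_inj[of "fst (s i t)" t "snd (s i t)" "fst (s j t)"]
      by (simp add: shift_braid_def)
    ultimately have "s i t = s j t" by (simp add: prod_eq_iff)
    then show False using assms ij t unfolding geom_braid_def by blast
  qed
next
  have "shift_braid \<psi> s i 0 = s i 0" "shift_braid \<psi> s i 1 = s i 1" for i
    using shift_eq_0_outside c_pos d_less_1 by (simp_all add: shift_braid_def)
  then show "(\<lambda>i. shift_braid \<psi> s i 0) ` {..<m} = (\<lambda>i. shift_braid \<psi> s i 1) ` {..<m}"
    using assms by (simp add: geom_braid_def)
qed

lemma radial_shift_uminus: "radial_shift (\<lambda>t x z. - \<psi> t x z) b c d"
proof
  show "continuous_on UNIV (\<lambda>q. - \<psi> (fst q) (fst (snd q)) (snd (snd q)))"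
    by (intro continuous_intros continuous_shift)
  show "\<bar>- \<psi> t x z - - \<psi> t y z\<bar> \<le> \<bar>x - y\<bar> / 2" for t x y z
    using shift_lipschitz[of t y z x] by (simp add: abs_minus_commute)
qed (simp_all add: b_pos shift_eq_0_inner c_pos c_le_d d_less_1 shift_eq_0_outside)

end

section \<open>Reversing braids\<close>

definition reverses_at :: "nat \<Rightarrow> braid \<Rightarrow> real \<Rightarrow> nat set \<Rightarrow> real \<Rightarrow> bool" where
  "reverses_at m s t I \<epsilon> \<longleftrightarrow> (\<forall>t1\<in>{t-\<epsilon><..<t}. \<forall>t2\<in>{t<..<t+\<epsilon>}.
     (\<forall>i\<in>I. \<forall>j\<in>I. fst (s i t1) < fst (s j t1) \<longleftrightarrow> fst (s j t2) < fst (s i t2)) \<and>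
     (\<forall>k<m. k \<notin> I \<longrightarrow>
        ((\<forall>i\<in>I. fst (s k t1) < fst (s i t1)) \<or> (\<forall>i\<in>I. fst (s i t1) < fst (s k t1))) \<and>
        ((\<forall>i\<in>I. fst (s k t2) < fst (s i t2)) \<or> (\<forall>i\<in>I. fst (s i t2) < fst (s k t2)))))"

definition reversing_braid :: "nat \<Rightarrow> braid \<Rightarrow> bool" where
  "reversing_braid m s \<longleftrightarrow> geom_braid m s \<and> finite (crossing_times m s) \<and>
     crossing_times m s \<subseteq> {0<..<1} \<and>
     (\<forall>t\<in>crossing_times m s. \<forall>x. 2 \<le> card (strands_at m s t x) \<longrightarrow>
        (\<exists>\<epsilon>>0. reverses_at m s t (strands_at m s t x) \<epsilon>))"

definition multi_crossings :: "nat \<Rightarrow> braid \<Rightarrow> (real \<times> real) set" where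
  "multi_crossings m s = {(t, x). t \<in> crossing_times m s \<and> 3 \<le> card (strands_at m s t x)}"

lemma reversing_braid_if_n_crossing_braid:
  "n_crossing_braid n m s \<Longrightarrow> reversing_braid m s"
  unfolding n_crossing_braid_def reversing_braid_def reverses_at_def Let_def by simp

lemma n_crossing_braid_2_if_no_multi_crossings:
  assumes "reversing_braid m s" "multi_crossings m s = {}"
  shows "n_crossing_braid 2 m s"
proof -
  have "card (strands_at m s t x) = 2"
    if "t \<in> crossing_times m s" "2 \<le> card (strands_at m s t x)" for t x
  proof -
    have "(t, x) \<notin> multi_crossings m s" using assms(2) by simp
    then show ?thesis using that unfolding multi_crossings_def by simp
  qed
  then show ?thesis
    using assms(1) unfolding n_crossing_braid_def reversing_braid_def reverses_at_def Let_def
    by simp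
qed

lemma finite_multi_crossings:
  assumes "finite (crossing_times m s)"
  shows "finite (multi_crossings m s)"
proof -
  have "multi_crossings m s \<subseteq> (\<lambda>(t, i). (t, fst (s i t))) ` (crossing_times m s \<times> {..<m})"
  proof
    fix p assume "p \<in> multi_crossings m s"
    then obtain t x where p: "p = (t, x)" "t \<in> crossing_times m s" "3 \<le> card (strands_at m s t x)"
      unfolding multi_crossings_def by auto
    then have "strands_at m s t x \<noteq> {}" by auto
    then obtain i where "i < m" "fst (s i t) = x"
      unfolding strands_at_def by blast
    then show "p \<in> (\<lambda>(t, i). (t, fst (s i t))) ` (crossing_times m s \<times> {..<m})"
      using p by force
  qed
  then show ?thesis using assms finite_subset by blast
qed

lemma reverses_at_mono:
  assumes "reverses_at m s t I \<epsilon>" "\<epsilon>' \<le> \<epsilon>"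
  shows "reverses_at m s t I \<epsilon>'"
proof -
  have "{t-\<epsilon>'<..<t} \<subseteq> {t-\<epsilon><..<t}" "{t<..<t+\<epsilon>'} \<subseteq> {t<..<t+\<epsilon>}" using assms(2) by auto
  then show ?thesis using assms(1) unfolding reverses_at_def by blast
qed

lemma reverses_at_order_cong:
  assumes rev: "reverses_at m s t I \<epsilon>" and "I \<subseteq> {..<m}"
    and same_order: "\<And>\<tau> i k. \<bar>\<tau> - t\<bar> < \<epsilon> \<Longrightarrow> i \<in> I \<Longrightarrow> k < m \<Longrightarrow>
      (fst (s' k \<tau>) < fst (s' i \<tau>) \<longleftrightarrow> fst (s k \<tau>) < fst (s i \<tau>)) \<and>
      (fst (s' i \<tau>) < fst (s' k \<tau>) \<longleftrightarrow> fst (s i \<tau>) < fst (s k \<tau>))"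
  shows "reverses_at m s' t I \<epsilon>"
  unfolding reverses_at_def
proof (intro ballI)
  fix t1 t2 assume t1: "t1 \<in> {t-\<epsilon><..<t}" and t2: "t2 \<in> {t<..<t+\<epsilon>}"
  then have "\<bar>t1 - t\<bar> < \<epsilon>" "\<bar>t2 - t\<bar> < \<epsilon>" by auto
  note same = same_order[OF this(1)] same_order[OF this(2)]
  have "i \<in> I \<Longrightarrow> j \<in> I \<Longrightarrow> j < m" for i j using assms(2) by auto
  with rev t1 t2 same show "(\<forall>i\<in>I. \<forall>j\<in>I. fst (s' i t1) < fst (s' j t1) \<longleftrightarrow> fst (s' j t2) < fst (s' i t2)) \<and>
     (\<forall>k<m. k \<notin> I \<longrightarrow>
        ((\<forall>i\<in>I. fst (s' k t1) < fst (s' i t1)) \<or> (\<forall>i\<in>I. fst (s' i t1) < fst (s' k t1))) \<and>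
        ((\<forall>i\<in>I. fst (s' k t2) < fst (s' i t2)) \<or> (\<forall>i\<in>I. fst (s' i t2) < fst (s' k t2))))"
    unfolding reverses_at_def by simp
qed

section \<open>Resolving one multiple crossing\<close>

lemma two_le_cardE:
  assumes "2 \<le> card A"
  obtains a b where "a \<in> A" "b \<in> A" "a \<noteq> b"
  using assms card_le_Suc_iff[of 1 A] by (auto simp: numeral_2_eq_2 card_le_Suc_iff)

lemma interpolation_strict_mono:
  fixes a b c d l :: real
  assumes "a < b" "c < d" "0 \<le> l" "l \<le> 1"
  shows "a + l * (c - a) < b + l * (d - b)"
proof -
  have "(1 - l) * a + l * c < (1 - l) * b + l * d"
  proof (cases "l = 1")
    case False
    then have "(1 - l) * a < (1 - l) * b" using assms by (intro mult_strict_left_mono) auto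
    moreover have "l * c \<le> l * d" using assms by (intro mult_left_mono) auto
    ultimately show ?thesis by linarith
  qed (use assms in simp)
  then show ?thesis by (simp add: algebra_simps)
qed

definition plateau :: "real \<Rightarrow> real \<Rightarrow> real \<Rightarrow> real" where
  "plateau c w x = max 0 (min 1 (2 - 2 * \<bar>x - c\<bar> / w))"

lemma plateau_nonneg: "0 \<le> plateau c w x"
  and plateau_le_1: "plateau c w x \<le> 1"
  by (simp_all add: plateau_def)

lemma plateau_eq_1: "0 < w \<Longrightarrow> \<bar>x - c\<bar> \<le> w/2 \<Longrightarrow> plateau c w x = 1"
  by (simp add: plateau_def field_simps)

lemma plateau_eq_0: "0 < w \<Longrightarrow> w \<le> \<bar>x - c\<bar> \<Longrightarrow> plateau c w x = 0"
  by (simp add: plateau_def field_simps)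

lemma plateau_lipschitz:
  assumes "0 < w"
  shows "\<bar>plateau c w x - plateau c w y\<bar> \<le> 2 * \<bar>x - y\<bar> / w"
proof -
  have "(2 - 2 * \<bar>x - c\<bar> / w) - (2 - 2 * \<bar>y - c\<bar> / w) = (2 / w) * (\<bar>y - c\<bar> - \<bar>x - c\<bar>)"
    using assms by (simp add: field_simps)
  also have "\<bar>\<dots>\<bar> = (2 / w) * \<bar>\<bar>y - c\<bar> - \<bar>x - c\<bar>\<bar>"
    using assms unfolding abs_mult by simp
  also have "\<dots> \<le> (2 / w) * \<bar>x - y\<bar>"
    using assms abs_triangle_ineq3[of "y - c" "x - c"]
    by (intro mult_left_mono) (auto simp: abs_minus_commute)
  finally have "\<bar>(2 - 2 * \<bar>x - c\<bar> / w) - (2 - 2 * \<bar>y - c\<bar> / w)\<bar> \<le> 2 * \<bar>x - y\<bar> / w"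
    by simp
  moreover have "\<bar>max 0 (min 1 p) - max 0 (min 1 q)\<bar> \<le> \<bar>p - q\<bar>" for p q :: real
    by (simp add: abs_le_iff max_def min_def, linarith)
  ultimately show ?thesis
    unfolding plateau_def by (rule order_trans[rotated])
qed

lemma continuous_on_plateau:
  "0 < w \<Longrightarrow> continuous_on S f \<Longrightarrow> continuous_on S (\<lambda>x. plateau c w (f x))"
  unfolding plateau_def by (intro continuous_intros) auto

locale multi_crossing_window =
  fixes m :: nat and s :: braid and t0 x0 :: real and I :: "nat set" and \<epsilon> r g \<delta> :: real
  assumes reversing: "reversing_braid m s"
    and I_def: "I = strands_at m s t0 x0" and two_le_card: "2 \<le> card I"
    and reverses: "reverses_at m s t0 I \<epsilon>"
    and r_pos: "0 < r" and r_less: "r < x0"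
    and g_pos: "0 < g"
    and heights_apart: "\<And>k l. k \<in> I \<Longrightarrow> l \<in> I \<Longrightarrow> k \<noteq> l \<Longrightarrow> g \<le> \<bar>snd (s k t0) - snd (s l t0)\<bar>"
    and \<delta>_pos: "0 < \<delta>" and \<delta>_less: "\<delta> < \<epsilon>"
    and window_start: "0 < t0 - \<delta>" and window_end: "t0 + \<delta> < 1"
    and inner_near: "\<And>t k. \<bar>t - t0\<bar> \<le> \<delta> \<Longrightarrow> k \<in> I \<Longrightarrow> \<bar>fst (s k t) - x0\<bar> \<le> r/8"
    and heights_near: "\<And>t k. \<bar>t - t0\<bar> \<le> \<delta> \<Longrightarrow> k \<in> I \<Longrightarrow> \<bar>snd (s k t) - snd (s k t0)\<bar> \<le> g/4"
    and outer_far: "\<And>t j. \<bar>t - t0\<bar> \<le> \<delta> \<Longrightarrow> j < m \<Longrightarrow> j \<notin> I \<Longrightarrow> r < \<bar>fst (s j t) - x0\<bar>"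
    and isolated: "\<And>t. \<bar>t - t0\<bar> \<le> \<delta> \<Longrightarrow> t \<noteq> t0 \<Longrightarrow> t \<notin> crossing_times m s"
begin

abbreviation X where "X i t \<equiv> fst (s i t)"
abbreviation Z where "Z i t \<equiv> snd (s i t)"

lemma geom: "geom_braid m s"
  using reversing by (simp add: reversing_braid_def)

lemma I_subset: "I \<subseteq> {..<m}"
  by (auto simp: I_def strands_at_def)

lemma finite_I: "finite I"
  using I_subset finite_subset by blast

lemma window_in_01: "\<bar>t - t0\<bar> \<le> \<delta> \<Longrightarrow> 0 < t \<and> t < 1"
  using window_start window_end by (auto simp: abs_le_iff)

lemma distinct_positions:
  assumes "\<bar>t - t0\<bar> \<le> \<delta>" "t \<noteq> t0" "i < m" "j < m" "i \<noteq> j"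
  shows "X i t \<noteq> X j t"
  using isolated[OF assms(1,2)] window_in_01[OF assms(1)] assms(3-5)
  unfolding crossing_times_def by auto

lemma order_swaps:
  assumes "k \<in> I" "l \<in> I" "t0 - \<delta> \<le> t1" "t1 < t0" "t0 < t2" "t2 \<le> t0 + \<delta>"
  shows "X k t1 < X l t1 \<longleftrightarrow> X l t2 < X k t2"
  using reverses assms \<delta>_less unfolding reverses_at_def by auto

lemma order_before:
  assumes "k \<in> I" "l \<in> I" "t0 - \<delta> \<le> t" "t < t0"
  shows "X k t < X l t \<longleftrightarrow> X k (t0 - \<delta>) < X l (t0 - \<delta>)"
  using order_swaps[OF assms, of "t0 + \<delta>"] order_swaps[OF assms(1,2), of "t0 - \<delta>" "t0 + \<delta>"]
    assms \<delta>_pos by simp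

lemma order_after:
  assumes "k \<in> I" "l \<in> I" "t0 < t" "t \<le> t0 + \<delta>"
  shows "X k t < X l t \<longleftrightarrow> X l (t0 - \<delta>) < X k (t0 - \<delta>)"
  using order_swaps[OF assms(2,1), of "t0 - \<delta>" t] assms \<delta>_pos by simp

definition start_rank :: "nat \<Rightarrow> nat" where
  "start_rank k = card {l\<in>I. X l (t0 - \<delta>) < X k (t0 - \<delta>)}"

lemma start_rank_strict_mono:
  assumes "k \<in> I" "l \<in> I" "X k (t0 - \<delta>) < X l (t0 - \<delta>)"
  shows "start_rank k < start_rank l"
proof -
  have "{l'\<in>I. X l' (t0 - \<delta>) < X k (t0 - \<delta>)} \<subset> {l'\<in>I. X l' (t0 - \<delta>) < X l (t0 - \<delta>)}"
    using assms by auto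
  then show ?thesis
    unfolding start_rank_def by (intro psubset_card_mono) (auto intro: finite_subset[OF _ finite_I])
qed

lemma distinct_start_positions:
  "k \<in> I \<Longrightarrow> l \<in> I \<Longrightarrow> k \<noteq> l \<Longrightarrow> X k (t0 - \<delta>) \<noteq> X l (t0 - \<delta>)"
  using distinct_positions[of "t0 - \<delta>" k l] I_subset \<delta>_pos by auto

lemma start_rank_less_iff:
  assumes "k \<in> I" "l \<in> I"
  shows "start_rank k < start_rank l \<longleftrightarrow> X k (t0 - \<delta>) < X l (t0 - \<delta>)"
  using start_rank_strict_mono[OF assms] start_rank_strict_mono[OF assms(2,1)] distinct_start_positions[OF assms]
  by (cases "k = l") force+

lemma start_rank_inj:
  assumes "k \<in> I" "l \<in> I" "start_rank k = start_rank l"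
  shows "k = l"
proof (rule ccontr)
  assume "k \<noteq> l"
  then show False
    using distinct_start_positions[OF assms(1,2)] start_rank_less_iff[OF assms(1,2)]
      start_rank_less_iff[OF assms(2,1)] assms(3) by linarith
qed

lemma start_rank_less_card:
  assumes "k \<in> I"
  shows "start_rank k < card I"
proof -
  have "start_rank k \<le> card (I - {k})"
    unfolding start_rank_def by (intro card_mono) (auto simp: finite_I)
  also have "\<dots> < card I" using assms finite_I two_le_card by simp
  finally show ?thesis .
qed

text \<open>These constants keep all crossings of the model strands below in the middle half of the
  time window, and the model strands within \<open>r/8\<close> of \<open>x0\<close> on the whole window.\<close>

definition gap :: real where "gap = \<delta> / (4 * card I)"
definition slope :: real where "slope = r / (16 * card I * \<delta>)"

text \<open>\<open>line k\<close> and \<open>line l\<close> cross only at \<open>meet_time k l\<close>, in the order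
  opposite to the one before \<open>t0\<close>; as the ranks are distinct, no three of them meet in a point.\<close>

definition line :: "nat \<Rightarrow> real \<Rightarrow> real" where
  "line k t = x0 + slope * start_rank k * (start_rank k * gap - (t - t0))"

definition meet_time :: "nat \<Rightarrow> nat \<Rightarrow> real" where
  "meet_time k l = t0 + (real (start_rank k) + start_rank l) * gap"

lemma meet_time_commute: "meet_time k l = meet_time l k"
  by (simp add: meet_time_def)

lemma gap_pos: "0 < gap" and slope_pos: "0 < slope"
  using \<delta>_pos two_le_card r_pos by (simp_all add: gap_def slope_def)

lemma card_I_gap: "card I * gap = \<delta> / 4"
  using two_le_card by (simp add: gap_def)

lemma line_less_iff:
  "line k t < line l t \<longleftrightarrow>
    (real (start_rank k) - start_rank l) * ((real (start_rank k) + start_rank l) * gap - (t - t0)) < 0"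
  (is "_ \<longleftrightarrow> ?A < 0")
proof -
  have "line k t - line l t = slope * ?A"
    unfolding line_def by (simp add: algebra_simps)
  then have "line k t < line l t \<longleftrightarrow> slope * ?A < slope * 0"
    by (metis diff_less_0_iff_less mult_zero_right)
  also have "\<dots> \<longleftrightarrow> ?A < 0"
    by (rule mult_less_cancel_left_pos[OF slope_pos])
  finally show ?thesis .
qed

lemma line_eq_imp_crossing_time:
  assumes "k \<in> I" "l \<in> I" "k \<noteq> l" "line k t = line l t"
  shows "t = meet_time k l"
proof -
  have "start_rank k \<noteq> start_rank l" using start_rank_inj assms by blast
  moreover have "slope * ((real (start_rank k) - start_rank l) * ((real (start_rank k) + start_rank l) * gap - (t - t0))) = 0"
    using assms(4) unfolding line_def by (simp add: algebra_simps)
  ultimately show ?thesis using slope_pos by (simp add: meet_time_def)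
qed

lemma line_order_swaps:
  assumes "t = meet_time k l" "t1 < t" "t < t2"
  shows "line k t1 < line l t1 \<longleftrightarrow> line l t2 < line k t2"
proof -
  have before: "(real (start_rank k) + start_rank l) * gap - (t1 - t0) = t - t1"
    and after: "(real (start_rank l) + start_rank k) * gap - (t2 - t0) = t - t2"
    using assms(1) by (simp_all add: meet_time_def)
  show ?thesis
    unfolding line_less_iff before after using assms(2,3) by (simp add: mult_less_0_iff)
qed

lemma line_order_stable:
  assumes "gap \<le> \<bar>meet_time k l - t\<bar>" "\<bar>\<tau> - t\<bar> < gap/2"
  shows "line k \<tau> < line l \<tau> \<longleftrightarrow> line k t < line l t"
proof -
  let ?c = "meet_time k l"
  have eq: "(real (start_rank k) + start_rank l) * gap - (x - t0) = ?c - x" for x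
    by (simp add: meet_time_def)
  have "0 < ?c - \<tau> \<and> 0 < ?c - t \<or> ?c - \<tau> < 0 \<and> ?c - t < 0"
    using assms gap_pos by (auto simp: abs_if abs_less_iff split: if_splits)
  then show ?thesis
    unfolding line_less_iff eq by (auto simp: mult_less_0_iff)
qed

lemma gap_le_meet_time_diff:
  assumes "k' \<in> I" "l \<in> I" "k' \<noteq> l"
  shows "gap \<le> \<bar>meet_time k' k - meet_time l k\<bar>"
proof -
  have "start_rank k' \<noteq> start_rank l" using start_rank_inj assms by blast
  then have "1 * gap \<le> \<bar>real (start_rank k') - start_rank l\<bar> * gap"
    using gap_pos by (intro mult_right_mono) auto
  moreover have "meet_time k' k - meet_time l k = (real (start_rank k') - start_rank l) * gap"
    by (simp add: meet_time_def algebra_simps)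
  ultimately show ?thesis using gap_pos by (simp add: abs_mult)
qed

lemma meet_time_in_window:
  assumes "k \<in> I" "l \<in> I" "k \<noteq> l"
  shows "t0 + gap \<le> meet_time k l" "meet_time k l + gap \<le> t0 + \<delta>/2"
proof -
  have "start_rank k \<noteq> start_rank l" using start_rank_inj assms by blast
  then have "1 \<le> real (start_rank k) + start_rank l" "real (start_rank k) + start_rank l + 1 \<le> 2 * card I"
    using start_rank_less_card[OF assms(1)] start_rank_less_card[OF assms(2)] by linarith+
  then have "1 * gap \<le> (real (start_rank k) + start_rank l) * gap"
    "(real (start_rank k) + start_rank l + 1) * gap \<le> (2 * card I) * gap"
    using gap_pos by (intro mult_right_mono; simp)+
  then show "t0 + gap \<le> meet_time k l" "meet_time k l + gap \<le> t0 + \<delta>/2"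
    using card_I_gap by (simp_all add: meet_time_def algebra_simps)
qed

lemma line_near:
  assumes "k \<in> I" "\<bar>t - t0\<bar> \<le> \<delta>"
  shows "\<bar>line k t - x0\<bar> \<le> r/8"
proof -
  have start_rank: "real (start_rank k) \<le> card I" using start_rank_less_card[OF assms(1)] by simp
  have "0 \<le> real (start_rank k) * gap" using gap_pos by simp
  then have "\<bar>real (start_rank k) * gap - (t - t0)\<bar> \<le> real (start_rank k) * gap + \<delta>"
    using assms(2) unfolding abs_le_iff by linarith
  also have "\<dots> \<le> card I * gap + \<delta>"
    using start_rank gap_pos by (simp add: mult_right_mono)
  finally have "\<bar>real (start_rank k) * gap - (t - t0)\<bar> \<le> 5/4 * \<delta>"
    using card_I_gap by simp
  then have "\<bar>line k t - x0\<bar> \<le> slope * (card I * (5/4 * \<delta>))"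
    unfolding line_def using slope_pos start_rank
    by (simp add: abs_mult mult.assoc mult_left_mono mult_mono)
  also have "\<dots> = r * 5 / 64"
    using two_le_card \<delta>_pos by (simp add: slope_def field_simps)
  finally show ?thesis using r_pos by simp
qed

text \<open>\<^const>\<open>clamp\<close> extends the strand continuously beyond \<open>[0, 1]\<close>, where the time cutoff
  vanishes anyway.\<close>

definition displacement :: "nat \<Rightarrow> real \<Rightarrow> real" where
  "displacement k t = plateau t0 \<delta> t * (line k t - X k (clamp 0 1 t))"

text \<open>Each strand \<open>k \<in> I\<close>, recognised by its height near \<open>Z k t0\<close>, is moved towards \<open>line k\<close>,
  all the way on the middle half of the time window. The radial cutoff has slope \<open>2/r\<close> and the
  displacements are at most \<open>r/4\<close>, so the shift is \<open>1/2\<close>-Lipschitz in the radius.\<close>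

definition shift :: "real \<Rightarrow> real \<Rightarrow> real \<Rightarrow> real" where
  "shift t x z = plateau x0 r x * (\<Sum>k\<in>I. plateau (Z k t0) (g/2) z * displacement k t)"

lemma displacement_in_window:
  assumes "\<bar>t - t0\<bar> \<le> \<delta>"
  shows "displacement k t = plateau t0 \<delta> t * (line k t - X k t)"
  using clamp_cancel_cbox[of t 0 1] window_in_01[OF assms] by (simp add: displacement_def)

lemma abs_displacement_le:
  assumes "k \<in> I"
  shows "\<bar>displacement k t\<bar> \<le> r/4"
proof (cases "\<bar>t - t0\<bar> \<le> \<delta>")
  case True
  have "\<bar>line k t - X k t\<bar> \<le> r/4"
    using line_near[OF assms True] inner_near[OF True assms] unfolding abs_le_iff by linarith
  then have "plateau t0 \<delta> t * \<bar>line k t - X k t\<bar> \<le> 1 * (r/4)"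
    using plateau_nonneg plateau_le_1 by (intro mult_mono) auto
  then show ?thesis
    using displacement_in_window[OF True] plateau_nonneg by (simp add: abs_mult)
qed (use r_pos \<delta>_pos in \<open>simp add: displacement_def plateau_eq_0\<close>)

lemma height_sum_eq_single:
  assumes "k \<in> I" "\<bar>z - Z k t0\<bar> < g/2"
  shows "(\<Sum>l\<in>I. plateau (Z l t0) (g/2) z * displacement l t) = plateau (Z k t0) (g/2) z * displacement k t"
proof -
  have "plateau (Z l t0) (g/2) z = 0" if "l \<in> I - {k}" for l
  proof -
    have "g \<le> \<bar>Z k t0 - Z l t0\<bar>" using heights_apart assms(1) that by blast
    then show ?thesis
      using assms(2) g_pos abs_triangle_ineq4[of "z - Z l t0" "z - Z k t0"]
      by (intro plateau_eq_0) auto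
  qed
  then show ?thesis
    using sum.remove[OF finite_I assms(1), of "\<lambda>l. plateau (Z l t0) (g/2) z * displacement l t"]
    by simp
qed

lemma abs_height_sum_le: "\<bar>\<Sum>k\<in>I. plateau (Z k t0) (g/2) z * displacement k t\<bar> \<le> r/4"
proof (cases "\<exists>k\<in>I. \<bar>z - Z k t0\<bar> < g/2")
  case True
  then obtain k where k: "k \<in> I" "\<bar>z - Z k t0\<bar> < g/2" by blast
  have "plateau (Z k t0) (g/2) z * \<bar>displacement k t\<bar> \<le> 1 * (r/4)"
    using abs_displacement_le[OF k(1)] plateau_nonneg plateau_le_1 by (intro mult_mono) auto
  then show ?thesis
    using height_sum_eq_single[OF k] plateau_nonneg by (simp add: abs_mult)
next
  case False
  then have "(\<Sum>k\<in>I. plateau (Z k t0) (g/2) z * displacement k t) = 0"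
    using g_pos by (intro sum.neutral) (auto simp: plateau_eq_0 not_less)
  then show ?thesis using r_pos by simp
qed

lemma shift_eq_0_outside_window: "\<delta> \<le> \<bar>t - t0\<bar> \<Longrightarrow> shift t x z = 0"
  using \<delta>_pos by (simp add: shift_def displacement_def plateau_eq_0)

lemma shift_eq_0_far: "r \<le> \<bar>x - x0\<bar> \<Longrightarrow> shift t x z = 0"
  using r_pos by (simp add: shift_def plateau_eq_0)

lemma shift_inner:
  assumes "k \<in> I" "\<bar>t - t0\<bar> \<le> \<delta>" "\<bar>x - x0\<bar> \<le> r/2"
  shows "shift t x (Z k t) = plateau t0 \<delta> t * (line k t - X k t)"
proof -
  have "\<bar>Z k t - Z k t0\<bar> < g/2" using heights_near[OF assms(2,1)] g_pos by simp
  then have "shift t x (Z k t) = plateau x0 r x * (plateau (Z k t0) (g/2) (Z k t) * displacement k t)"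
    unfolding shift_def by (simp add: height_sum_eq_single[OF assms(1)])
  then show ?thesis
    using heights_near[OF assms(2,1)] assms(3) r_pos g_pos
    by (simp add: plateau_eq_1 displacement_in_window[OF assms(2)])
qed

lemma continuous_on_displacement:
  assumes "k \<in> I"
  shows "continuous_on UNIV (displacement k)"
proof -
  have "continuous_on (cbox 0 1) (s k)" using geom assms I_subset by (auto simp: geom_braid_def)
  then have "continuous_on UNIV (\<lambda>t. s k (clamp 0 1 t))" by (rule clamp_continuous_on)
  then show ?thesis
    unfolding displacement_def line_def using \<delta>_pos
    by (intro continuous_intros continuous_on_plateau continuous_on_id)
qed

lemma continuous_shift: "continuous_on UNIV (\<lambda>q. shift (fst q) (fst (snd q)) (snd (snd q)))"
proof -
  have "continuous_on UNIV (\<lambda>q::pt3. displacement k (fst q))" if "k \<in> I" for k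
    by (rule continuous_on_compose2[OF continuous_on_displacement[OF that]])
      (auto intro: continuous_intros)
  then show ?thesis
    unfolding shift_def using r_pos g_pos
    by (intro continuous_intros continuous_on_plateau) auto
qed

lemma shift_lipschitz: "\<bar>shift t x z - shift t y z\<bar> \<le> \<bar>x - y\<bar> / 2"
proof -
  have "\<bar>shift t x z - shift t y z\<bar>
      = \<bar>plateau x0 r x - plateau x0 r y\<bar> * \<bar>\<Sum>k\<in>I. plateau (Z k t0) (g/2) z * displacement k t\<bar>"
    unfolding shift_def by (simp add: abs_mult flip: left_diff_distrib)
  also have "\<dots> \<le> (2 * \<bar>x - y\<bar> / r) * (r/4)"
    using plateau_lipschitz[OF r_pos] abs_height_sum_le r_pos by (intro mult_mono) auto
  also have "\<dots> = \<bar>x - y\<bar> / 2" using r_pos by simp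
  finally show ?thesis .
qed

lemma radial_shift: "radial_shift shift (x0 - r) (t0 - \<delta>) (t0 + \<delta>)"
proof
  show "continuous_on UNIV (\<lambda>q. shift (fst q) (fst (snd q)) (snd (snd q)))"
    by (rule continuous_shift)
  show "shift t x z = 0" if "x \<le> x0 - r" for t x z
    using that by (intro shift_eq_0_far) simp
  show "shift t x z = 0" if "t < t0 - \<delta> \<or> t0 + \<delta> < t" for t x z
    using that by (intro shift_eq_0_outside_window) auto
  show "\<bar>shift t x z - shift t y z\<bar> \<le> \<bar>x - y\<bar> / 2" for t x y z
    by (rule shift_lipschitz)
qed (use r_less window_start window_end \<delta>_pos in auto)

definition resolved :: braid where
  "resolved = shift_braid shift s"

abbreviation Xr where "Xr i t \<equiv> fst (resolved i t)"

lemma resolved_eq: "resolved i t = (X i t + shift t (X i t) (Z i t), Z i t)"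
  by (simp add: resolved_def shift_braid_def)

lemma resolved_outside_window: "\<delta> \<le> \<bar>t - t0\<bar> \<Longrightarrow> resolved i t = s i t"
  by (simp add: resolved_eq shift_eq_0_outside_window)

lemma resolved_inner:
  assumes "k \<in> I" "\<bar>t - t0\<bar> \<le> \<delta>"
  shows "Xr k t = X k t + plateau t0 \<delta> t * (line k t - X k t)"
  using shift_inner[OF assms] inner_near[OF assms(2,1)] r_pos by (simp add: resolved_eq)

lemma shift_outer: "j < m \<Longrightarrow> j \<notin> I \<Longrightarrow> shift t (X j t) z = 0"
  using shift_eq_0_outside_window outer_far shift_eq_0_far
  by (cases "\<bar>t - t0\<bar> \<le> \<delta>") (auto simp: less_imp_le)

lemma resolved_outer: "j < m \<Longrightarrow> j \<notin> I \<Longrightarrow> Xr j t = X j t"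
  by (simp add: resolved_eq shift_outer)

lemma resolved_inner_near:
  assumes "k \<in> I" "\<bar>t - t0\<bar> \<le> \<delta>"
  shows "\<bar>Xr k t - x0\<bar> \<le> r/8"
proof -
  let ?w = "plateau t0 \<delta> t"
  have "Xr k t - x0 = (1 - ?w) * (X k t - x0) + ?w * (line k t - x0)"
    unfolding resolved_inner[OF assms] by (simp add: algebra_simps)
  then have "\<bar>Xr k t - x0\<bar> \<le> \<bar>(1 - ?w) * (X k t - x0)\<bar> + \<bar>?w * (line k t - x0)\<bar>"
    by (simp only: abs_triangle_ineq)
  also have "\<dots> \<le> (1 - ?w) * (r/8) + ?w * (r/8)"
    unfolding abs_mult using inner_near[OF assms(2,1)] line_near[OF assms] plateau_nonneg plateau_le_1
    by (intro add_mono mult_mono) auto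
  also have "\<dots> = r/8"
    by (simp add: field_simps)
  finally show ?thesis .
qed

lemma unshift_resolved:
  assumes "i < m"
  shows "shift_braid (\<lambda>t x z. - shift t x z) resolved i t = s i t"
proof (cases "i \<in> I \<and> \<bar>t - t0\<bar> \<le> \<delta>")
  case True
  \<comment> \<open>near the strands of \<open>I\<close> the shift does not depend on the radius\<close>
  then have "shift t (Xr i t) (Z i t) = shift t (X i t) (Z i t)"
    using shift_inner[of i t "Xr i t"] shift_inner[of i t "X i t"] resolved_inner_near[of i t]
      inner_near[of t i] r_pos by simp
  then show ?thesis
    by (simp add: shift_braid_def resolved_eq)
next
  case False
  then have "shift t (X i t) (Z i t) = 0"
    using assms shift_outer shift_eq_0_outside_window by force
  then show ?thesis
    by (simp add: shift_braid_def resolved_eq)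
qed

lemma resolved_order_mixed:
  assumes "i < m" "j < m" "\<not> (i \<in> I \<and> j \<in> I)"
  shows "(Xr i t < Xr j t \<longleftrightarrow> X i t < X j t) \<and> (Xr i t = Xr j t \<longleftrightarrow> X i t = X j t)"
proof (cases "\<bar>t - t0\<bar> \<le> \<delta>")
  case True
  consider "i \<notin> I" "j \<notin> I" | "i \<in> I" "j \<notin> I" | "i \<notin> I" "j \<in> I"
    using assms(3) by blast
  then show ?thesis
  proof cases
    case 1
    then show ?thesis using resolved_outer assms by simp
  next
    case 2
    have "\<bar>Xr i t - x0\<bar> \<le> r/8" "\<bar>X i t - x0\<bar> \<le> r/8" "r < \<bar>X j t - x0\<bar>" "Xr j t = X j t"
      using resolved_inner_near inner_near outer_far resolved_outer True 2 assms by blast+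
    then show ?thesis using r_pos by (auto simp: abs_if split: if_splits)
  next
    case 3
    have "\<bar>Xr j t - x0\<bar> \<le> r/8" "\<bar>X j t - x0\<bar> \<le> r/8" "r < \<bar>X i t - x0\<bar>" "Xr i t = X i t"
      using resolved_inner_near inner_near outer_far resolved_outer True 3 assms by blast+
    then show ?thesis using r_pos by (auto simp: abs_if split: if_splits)
  qed
qed (simp add: resolved_outside_window)

lemma resolved_before:
  assumes "k \<in> I" "l \<in> I" "t0 - \<delta> \<le> t" "t < t0" "start_rank k < start_rank l"
  shows "Xr k t < Xr l t"
proof -
  have window: "\<bar>t - t0\<bar> \<le> \<delta>" using assms(3,4) by simp
  have "X k t < X l t"
    using order_before[OF assms(1-4)] start_rank_less_iff[OF assms(1,2)] assms(5) by simp
  moreover have "line k t < line l t"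
  proof -
    have "0 \<le> (real (start_rank k) + start_rank l) * gap" using gap_pos by simp
    then show ?thesis
      unfolding line_less_iff using assms(4,5) by (intro mult_neg_pos) auto
  qed
  ultimately show ?thesis
    unfolding resolved_inner[OF assms(1) window] resolved_inner[OF assms(2) window]
    using plateau_nonneg plateau_le_1 by (intro interpolation_strict_mono)
qed

lemma resolved_after:
  assumes "k \<in> I" "l \<in> I" "t0 + \<delta>/2 \<le> t" "t \<le> t0 + \<delta>" "start_rank l < start_rank k"
  shows "Xr k t < Xr l t"
proof -
  have window: "\<bar>t - t0\<bar> \<le> \<delta>" using assms(3,4) \<delta>_pos by simp
  have "X k t < X l t"
    using order_after[OF assms(1,2), of t] assms(3-5) \<delta>_pos start_rank_less_iff[OF assms(2,1)] by simp
  moreover have "line k t < line l t"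
  proof -
    have "meet_time k l < t"
      using meet_time_in_window[OF assms(1,2)] assms(3,5) gap_pos by fastforce
    then show ?thesis
      unfolding line_less_iff using assms(5) by (intro mult_pos_neg) (auto simp: meet_time_def)
  qed
  ultimately show ?thesis
    unfolding resolved_inner[OF assms(1) window] resolved_inner[OF assms(2) window]
    using plateau_nonneg plateau_le_1 by (intro interpolation_strict_mono)
qed

lemma resolved_middle:
  assumes "k \<in> I" "\<bar>t - t0\<bar> \<le> \<delta>/2"
  shows "Xr k t = line k t"
  using resolved_inner[OF assms(1)] plateau_eq_1[OF \<delta>_pos assms(2)] assms(2) \<delta>_pos by simp

lemma resolved_meet:
  assumes "k \<in> I" "l \<in> I" "k \<noteq> l" "\<bar>t - t0\<bar> \<le> \<delta>" "Xr k t = Xr l t"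
  shows "t = meet_time k l" "\<bar>t - t0\<bar> \<le> \<delta>/2"
proof -
  have ranks: "start_rank k \<noteq> start_rank l" using start_rank_inj assms(1-3) by blast
  have "\<not> t < t0"
  proof
    assume "t < t0"
    moreover have "t0 - \<delta> \<le> t" using assms(4) by (simp add: abs_le_iff)
    ultimately show False
      using resolved_before[OF assms(1,2)] resolved_before[OF assms(2,1)] ranks assms(5)
      by (metis less_irrefl linorder_neqE_nat)
  qed
  moreover have "\<not> t0 + \<delta>/2 \<le> t"
  proof
    assume "t0 + \<delta>/2 \<le> t"
    moreover have "t \<le> t0 + \<delta>" using assms(4) by (simp add: abs_le_iff)
    ultimately show False
      using resolved_after[OF assms(1,2)] resolved_after[OF assms(2,1)] ranks assms(5)
      by (metis less_irrefl linorder_neqE_nat)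
  qed
  ultimately show middle: "\<bar>t - t0\<bar> \<le> \<delta>/2" by simp
  show "t = meet_time k l"
    using line_eq_imp_crossing_time[OF assms(1-3)] assms(5)
      resolved_middle[OF assms(1) middle] resolved_middle[OF assms(2) middle] by simp
qed

lemma geom_braid_resolved: "geom_braid m resolved"
  unfolding resolved_def by (rule radial_shift.geom_braid_shift_braid[OF radial_shift geom])

lemma crossing_times_resolved:
  assumes "t \<in> crossing_times m resolved"
  shows "t \<in> crossing_times m s \<or> (\<exists>k\<in>I. \<exists>l\<in>I. k \<noteq> l \<and> t = meet_time k l)"
proof -
  obtain i j where ij: "t \<in> {0..1}" "i < m" "j < m" "i \<noteq> j" "Xr i t = Xr j t"
    using assms unfolding crossing_times_def by auto
  show ?thesis
  proof (cases "i \<in> I \<and> j \<in> I \<and> \<bar>t - t0\<bar> \<le> \<delta>")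
    case True
    then show ?thesis using resolved_meet[of i j t] ij by blast
  next
    case False
    then have "X i t = X j t"
      using ij resolved_order_mixed[OF ij(2,3)] resolved_outside_window[of t] by fastforce
    then show ?thesis using ij unfolding crossing_times_def by auto
  qed
qed

lemma crossing_times_resolved_subset: "crossing_times m resolved \<subseteq> {0<..<1}"
proof
  fix t assume "t \<in> crossing_times m resolved"
  moreover have "crossing_times m s \<subseteq> {0<..<1}"
    using reversing by (simp add: reversing_braid_def)
  moreover have "meet_time k l \<in> {0<..<1}" if "k \<in> I" "l \<in> I" "k \<noteq> l" for k l
    using meet_time_in_window[OF that] window_in_01[of "meet_time k l"] gap_pos \<delta>_pos by auto
  ultimately show "t \<in> {0<..<1}" using crossing_times_resolved by blast
qed

lemma finite_crossing_times_resolved: "finite (crossing_times m resolved)"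
proof -
  have "crossing_times m resolved \<subseteq> crossing_times m s \<union> (\<lambda>(k, l). meet_time k l) ` (I \<times> I)"
    using crossing_times_resolved by fastforce
  moreover have "finite (crossing_times m s)"
    using reversing by (simp add: reversing_braid_def)
  ultimately show ?thesis
    using finite_I finite_subset by blast
qed

lemma reverses_at_resolved_if_unchanged:
  assumes t: "t \<in> {0..1}" and two: "2 \<le> card (strands_at m resolved t y)"
    and same_strands: "strands_at m resolved t y = strands_at m s t y"
    and "0 < e"
    and same_order: "\<And>\<tau> i k. \<bar>\<tau> - t\<bar> < e \<Longrightarrow> i \<in> strands_at m s t y \<Longrightarrow> k < m \<Longrightarrow>
        (Xr k \<tau> < Xr i \<tau> \<longleftrightarrow> X k \<tau> < X i \<tau>) \<and> (Xr i \<tau> < Xr k \<tau> \<longleftrightarrow> X i \<tau> < X k \<tau>)"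
  shows "t \<in> crossing_times m s" "\<exists>\<epsilon>>0. reverses_at m resolved t (strands_at m resolved t y) \<epsilon>"
proof -
  obtain i j where "i \<in> strands_at m s t y" "j \<in> strands_at m s t y" "i \<noteq> j"
    using two unfolding same_strands by (rule two_le_cardE)
  then show crossing: "t \<in> crossing_times m s"
    using t unfolding strands_at_def crossing_times_def by auto
  obtain \<epsilon> where \<epsilon>: "0 < \<epsilon>" "reverses_at m s t (strands_at m s t y) \<epsilon>"
    using reversing crossing two unfolding same_strands reversing_braid_def by blast
  have "reverses_at m resolved t (strands_at m s t y) (min \<epsilon> e)"
  proof (rule reverses_at_order_cong)
    show "reverses_at m s t (strands_at m s t y) (min \<epsilon> e)"
      using reverses_at_mono[OF \<epsilon>(2)] by simp
    show "strands_at m s t y \<subseteq> {..<m}"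
      by (auto simp: strands_at_def)
  qed (simp add: same_order)
  then show "\<exists>\<epsilon>>0. reverses_at m resolved t (strands_at m resolved t y) \<epsilon>"
    using \<epsilon>(1) \<open>0 < e\<close> same_strands by (intro exI[of _ "min \<epsilon> e"]) simp
qed

lemma crossing_outside_window:
  assumes "\<delta> < \<bar>t - t0\<bar>" "t \<in> {0..1}" "2 \<le> card (strands_at m resolved t y)"
  shows "strands_at m resolved t y = strands_at m s t y" "t \<in> crossing_times m s"
    "\<exists>\<epsilon>>0. reverses_at m resolved t (strands_at m resolved t y) \<epsilon>"
proof -
  have unchanged: "resolved i \<tau> = s i \<tau>" if "\<bar>\<tau> - t\<bar> < \<bar>t - t0\<bar> - \<delta>" for i \<tau>
    using that by (intro resolved_outside_window) (auto simp: abs_if split: if_splits)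
  show same: "strands_at m resolved t y = strands_at m s t y"
    unfolding strands_at_def using unchanged[of t] assms(1) by simp
  show "t \<in> crossing_times m s" "\<exists>\<epsilon>>0. reverses_at m resolved t (strands_at m resolved t y) \<epsilon>"
    using reverses_at_resolved_if_unchanged[OF assms(2,3) same, of "\<bar>t - t0\<bar> - \<delta>"] unchanged assms(1)
    by auto
qed

lemma crossing_with_outer_strand:
  assumes window: "\<bar>t - t0\<bar> \<le> \<delta>" and j: "j \<in> strands_at m resolved t y" "j \<notin> I"
    and two: "2 \<le> card (strands_at m resolved t y)"
  shows "strands_at m resolved t y = strands_at m s t y" "t \<in> crossing_times m s" "y \<noteq> x0"
    "\<exists>\<epsilon>>0. reverses_at m resolved t (strands_at m resolved t y) \<epsilon>"
proof -
  have "j < m" "Xr j t = y" using j(1) by (auto simp: strands_at_def)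
  then have j_less: "j < m" and y: "y = X j t" using resolved_outer[OF _ j(2)] by auto
  have far: "r < \<bar>y - x0\<bar>" using outer_far[OF window j_less j(2)] y by simp
  then show "y \<noteq> x0" using r_pos by auto
  have "Xr i t = Xr j t \<longleftrightarrow> X i t = X j t" if "i < m" for i
    using resolved_order_mixed[OF that j_less] j(2) by blast
  then show same: "strands_at m resolved t y = strands_at m s t y"
    unfolding strands_at_def using resolved_outer[OF j_less j(2)] y by auto
  have outer: "i < m \<and> i \<notin> I" if "i \<in> strands_at m s t y" for i
    using that inner_near[OF window] far r_pos by (force simp: strands_at_def)
  show "t \<in> crossing_times m s" "\<exists>\<epsilon>>0. reverses_at m resolved t (strands_at m resolved t y) \<epsilon>"
    using reverses_at_resolved_if_unchanged[OF _ two same zero_less_one] window_in_01[OF window]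
      resolved_order_mixed outer by auto
qed

lemma line_eq_at_meet_time: "line k (meet_time k l) = line l (meet_time k l)"
  by (simp add: line_def meet_time_def algebra_simps)

lemma near_meet_time_in_window:
  assumes "k \<in> I" "l \<in> I" "k \<noteq> l" "\<bar>\<tau> - meet_time k l\<bar> < gap/2"
  shows "\<bar>\<tau> - t0\<bar> \<le> \<delta>/2"
proof -
  have "- (gap/2) < \<tau> - meet_time k l" "\<tau> - meet_time k l < gap/2"
    using assms(4) unfolding abs_less_iff by linarith+
  then show ?thesis
    using meet_time_in_window[OF assms(1-3)] gap_pos unfolding abs_le_iff by linarith
qed

lemma resolved_near_meet:
  assumes "k \<in> I" "l \<in> I" "k \<noteq> l" "\<bar>\<tau> - meet_time k l\<bar> < gap/2" "i \<in> I"
  shows "Xr i \<tau> = line i \<tau>"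
  using resolved_middle[OF assms(5) near_meet_time_in_window[OF assms(1-4)]] .

lemma other_strand_aside_meet:
  assumes kl: "k \<in> I" "l \<in> I" "k \<noteq> l" and \<tau>: "\<bar>\<tau> - meet_time k l\<bar> < gap/2"
    and j: "j < m" "j \<notin> {k, l}"
  shows "(Xr j \<tau> < Xr k \<tau> \<and> Xr j \<tau> < Xr l \<tau>) \<or> (Xr k \<tau> < Xr j \<tau> \<and> Xr l \<tau> < Xr j \<tau>)"
proof (cases "j \<in> I")
  case True
  let ?t = "meet_time k l"
  have apart_k: "gap \<le> \<bar>meet_time j k - ?t\<bar>" and apart_l: "gap \<le> \<bar>meet_time j l - ?t\<bar>"
    using gap_le_meet_time_diff[OF True kl(2), of k] gap_le_meet_time_diff[OF True kl(1), of l] j(2)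
    by (auto simp: meet_time_commute)
  have "line j ?t \<noteq> line k ?t"
    using line_eq_imp_crossing_time[OF True kl(1)] apart_k j(2) gap_pos by force
  then have "line j ?t < line k ?t \<and> line j ?t < line l ?t \<or> line k ?t < line j ?t \<and> line l ?t < line j ?t"
    using line_eq_at_meet_time[of k l] by linarith
  moreover note stable = line_order_stable[of _ _ ?t \<tau>]
  ultimately show ?thesis
    using resolved_near_meet[OF kl \<tau>] True kl apart_k apart_l \<tau>
      stable[of j k] stable[of j l] stable[of k j] stable[of l j]
    by (auto simp: meet_time_commute abs_minus_commute)
next
  case False
  have window: "\<bar>\<tau> - t0\<bar> \<le> \<delta>"
    using near_meet_time_in_window[OF kl \<tau>] \<delta>_pos by simp
  have "r < \<bar>Xr j \<tau> - x0\<bar>"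
    using outer_far[OF window j(1) False] resolved_outer[OF j(1) False] by simp
  moreover have "\<bar>Xr k \<tau> - x0\<bar> \<le> r/8" "\<bar>Xr l \<tau> - x0\<bar> \<le> r/8"
    using resolved_inner_near[OF _ window] kl by auto
  ultimately show ?thesis using r_pos by (auto simp: abs_if split: if_splits)
qed

lemma reverses_at_meet_time:
  assumes kl: "k \<in> I" "l \<in> I" "k \<noteq> l"
  shows "reverses_at m resolved (meet_time k l) {k, l} (gap/2)"
  unfolding reverses_at_def
proof (intro ballI conjI allI impI)
  let ?t = "meet_time k l"
  fix t1 t2 assume t1: "t1 \<in> {?t - gap/2<..<?t}" and t2: "t2 \<in> {?t<..<?t + gap/2}"
  then have near: "\<bar>t1 - ?t\<bar> < gap/2" "\<bar>t2 - ?t\<bar> < gap/2" by auto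
  note on_line = resolved_near_meet[OF kl near(1)] resolved_near_meet[OF kl near(2)]
  {
    fix i j assume ij: "i \<in> {k, l}" "j \<in> {k, l}"
    have "line i t1 < line j t1 \<longleftrightarrow> line j t2 < line i t2"
      using ij line_order_swaps[of ?t k l t1 t2] line_order_swaps[of ?t l k t1 t2] t1 t2
      by (auto simp: meet_time_commute)
    then show "Xr i t1 < Xr j t1 \<longleftrightarrow> Xr j t2 < Xr i t2"
      using ij kl on_line by auto
  next
    fix j assume "j < m" "j \<notin> {k, l}"
    then show "(\<forall>i\<in>{k, l}. Xr j t1 < Xr i t1) \<or> (\<forall>i\<in>{k, l}. Xr i t1 < Xr j t1)"
      "(\<forall>i\<in>{k, l}. Xr j t2 < Xr i t2) \<or> (\<forall>i\<in>{k, l}. Xr i t2 < Xr j t2)"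
      using other_strand_aside_meet[OF kl near(1)] other_strand_aside_meet[OF kl near(2)] by auto
  }
qed

lemma crossing_of_inner_strands:
  assumes window: "\<bar>t - t0\<bar> \<le> \<delta>" and inner: "strands_at m resolved t y \<subseteq> I"
    and two: "2 \<le> card (strands_at m resolved t y)"
  shows "card (strands_at m resolved t y) = 2"
    "\<exists>\<epsilon>>0. reverses_at m resolved t (strands_at m resolved t y) \<epsilon>"
proof -
  obtain k l where kl: "k \<in> strands_at m resolved t y" "l \<in> strands_at m resolved t y" "k \<noteq> l"
    using two by (rule two_le_cardE)
  have kl_I: "k \<in> I" "l \<in> I" using kl inner by auto
  have at: "Xr i t = y" if "i \<in> strands_at m resolved t y" for i
    using that by (simp add: strands_at_def)
  have t: "t = meet_time k l"
    using resolved_meet[OF kl_I kl(3) window] at kl by simp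
  have pair: "strands_at m resolved t y = {k, l}"
  proof (intro equalityI subsetI)
    fix j assume j: "j \<in> strands_at m resolved t y"
    show "j \<in> {k, l}"
    proof (rule ccontr)
      assume "j \<notin> {k, l}"
      then have "t = meet_time j k"
        using resolved_meet[of j k t] inner j kl at window by auto
      then have "start_rank j = start_rank l"
        using t gap_pos by (simp add: meet_time_def)
      then show False
        using start_rank_inj[of j l] inner j kl_I \<open>j \<notin> {k, l}\<close> by auto
    qed
  qed (use kl in auto)
  then show "card (strands_at m resolved t y) = 2" using kl(3) by simp
  have "reverses_at m resolved t {k, l} (gap/2)"
    using reverses_at_meet_time[OF kl_I kl(3)] t by simp
  then show "\<exists>\<epsilon>>0. reverses_at m resolved t (strands_at m resolved t y) \<epsilon>"
    unfolding pair using gap_pos by (intro exI[of _ "gap/2"]) simp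
qed

lemma reversing_braid_resolved: "reversing_braid m resolved"
  unfolding reversing_braid_def
proof (intro conjI ballI allI impI)
  fix t y assume t: "t \<in> crossing_times m resolved" and two: "2 \<le> card (strands_at m resolved t y)"
  then have t01: "t \<in> {0..1}" using crossing_times_resolved_subset by auto
  consider "\<delta> < \<bar>t - t0\<bar>" | "\<bar>t - t0\<bar> \<le> \<delta>" "strands_at m resolved t y \<subseteq> I"
    | j where "\<bar>t - t0\<bar> \<le> \<delta>" "j \<in> strands_at m resolved t y" "j \<notin> I"
    by fastforce
  then show "\<exists>\<epsilon>>0. reverses_at m resolved t (strands_at m resolved t y) \<epsilon>"
    by cases (use crossing_outside_window[OF _ t01 two] crossing_of_inner_strands[OF _ _ two]
        crossing_with_outer_strand[OF _ _ _ two] in blast)+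
qed (simp_all add: geom_braid_resolved finite_crossing_times_resolved crossing_times_resolved_subset)

lemma multi_crossings_resolved: "multi_crossings m resolved \<subseteq> multi_crossings m s - {(t0, x0)}"
proof
  fix p assume "p \<in> multi_crossings m resolved"
  then obtain t y where p: "p = (t, y)" "t \<in> crossing_times m resolved"
    and three: "3 \<le> card (strands_at m resolved t y)"
    unfolding multi_crossings_def by auto
  then have two: "2 \<le> card (strands_at m resolved t y)" and t01: "t \<in> {0..1}"
    using crossing_times_resolved_subset by auto
  consider "\<delta> < \<bar>t - t0\<bar>" | "\<bar>t - t0\<bar> \<le> \<delta>" "strands_at m resolved t y \<subseteq> I"
    | j where "\<bar>t - t0\<bar> \<le> \<delta>" "j \<in> strands_at m resolved t y" "j \<notin> I"
    by fastforce
  then show "p \<in> multi_crossings m s - {(t0, x0)}"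
  proof cases
    case 1
    then show ?thesis
      using crossing_outside_window[OF 1 t01 two] three p \<delta>_pos by (auto simp: multi_crossings_def)
  next
    case 2
    then show ?thesis using crossing_of_inner_strands[OF 2 two] three by simp
  next
    case 3
    then show ?thesis
      using crossing_with_outer_strand[OF 3 two] three p by (auto simp: multi_crossings_def)
  qed
qed

lemma isotopic_resolved: "isotopic (braid_closure m resolved) (braid_closure m s)"
proof -
  have "fst (resolved i t) > 0" if "i < m" "t \<in> {0..1}" for i t
    using geom_braid_resolved that by (simp add: geom_braid_def)
  then have "isotopic (braid_closure m resolved)
      (braid_closure m (shift_braid (\<lambda>t x z. - shift t x z) resolved))"
    by (rule radial_shift.isotopic_shift_braid[OF radial_shift.radial_shift_uminus[OF radial_shift]])
  moreover have "braid_closure m (shift_braid (\<lambda>t x z. - shift t x z) resolved) = braid_closure m s"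
    by (rule braid_closure_cong) (simp add: unshift_resolved)
  ultimately show ?thesis by simp
qed

end

section \<open>Resolving all multiple crossings\<close>

lemma finite_pos_lower_bound:
  fixes f :: "'a \<Rightarrow> real"
  assumes "finite A" "\<And>a. a \<in> A \<Longrightarrow> 0 < f a"
  shows "\<exists>r>0. \<forall>a\<in>A. r \<le> f a"
  using assms by (intro exI[of _ "Min (insert 1 (f ` A))"]) (auto simp: Min_gr_iff)

lemma eventually_nhds_obtain_radius:
  fixes t0 :: real
  assumes "eventually P (nhds t0)" "0 < a"
  obtains \<delta> where "0 < \<delta>" "\<delta> < a" "\<And>t. \<bar>t - t0\<bar> \<le> \<delta> \<Longrightarrow> P t"
proof -
  obtain d where "0 < d" "\<And>t. dist t t0 < d \<Longrightarrow> P t"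
    using assms(1) unfolding eventually_nhds_metric by blast
  then show thesis
    using assms(2) by (intro that[of "min (d/2) (a/2)"]) (auto simp: dist_real_def)
qed

lemma eventually_nhds_dist_less:
  fixes f :: "real \<Rightarrow> 'a::metric_space"
  assumes "continuous_on {0..1} f" "t0 \<in> {0<..<1}" "0 < e"
  shows "eventually (\<lambda>t. dist (f t) (f t0) < e) (nhds t0)"
proof -
  have "isCont f t0"
    using continuous_on_interior[OF assms(1)] assms(2) by simp
  then have "(f \<longlongrightarrow> f t0) (nhds t0)"
    by (simp add: isCont_def tendsto_at_iff_tendsto_nhds)
  then show ?thesis using assms(3) by (rule tendstoD)
qed

lemma eventually_near_crossing:
  assumes "geom_braid m s" "finite (crossing_times m s)" "t0 \<in> {0<..<1}" "0 < e"
  shows "eventually (\<lambda>t. (\<forall>i<m. \<bar>fst (s i t) - fst (s i t0)\<bar> < e \<and> \<bar>snd (s i t) - snd (s i t0)\<bar> < e) \<and>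
    (t \<noteq> t0 \<longrightarrow> t \<notin> crossing_times m s)) (nhds t0)"
proof (rule eventually_conj)
  have "eventually (\<lambda>t. \<forall>i\<in>{..<m}. dist (s i t) (s i t0) < e) (nhds t0)"
    using assms(1,3,4) unfolding geom_braid_def
    by (intro eventually_ball_finite ballI eventually_nhds_dist_less) auto
  then show "eventually (\<lambda>t. \<forall>i<m. \<bar>fst (s i t) - fst (s i t0)\<bar> < e \<and> \<bar>snd (s i t) - snd (s i t0)\<bar> < e)
      (nhds t0)"
    by (rule eventually_mono)
      (metis dist_fst_le dist_snd_le dist_real_def le_less_trans lessThan_iff)
  have "eventually (\<lambda>t. \<forall>c\<in>crossing_times m s. t \<noteq> c) (at t0)"
    using assms(2) by (intro eventually_ball_finite ballI eventually_neq_at_within)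
  then show "eventually (\<lambda>t. t \<noteq> t0 \<longrightarrow> t \<notin> crossing_times m s) (nhds t0)"
    unfolding eventually_at_filter by (rule eventually_mono) blast
qed

lemma heights_apart_at_crossing:
  assumes "geom_braid m s" "t0 \<in> {0..1}"
  obtains g where "0 < g" "\<And>k l. k \<in> strands_at m s t0 x0 \<Longrightarrow> l \<in> strands_at m s t0 x0 \<Longrightarrow> k \<noteq> l \<Longrightarrow>
    g \<le> \<bar>snd (s k t0) - snd (s l t0)\<bar>"
proof -
  let ?P = "{(k, l). k \<in> strands_at m s t0 x0 \<and> l \<in> strands_at m s t0 x0 \<and> k \<noteq> l}"
  let ?h = "\<lambda>p. \<bar>snd (s (fst p) t0) - snd (s (snd p) t0)\<bar>"
  have "finite ?P"
    by (rule finite_subset[of _ "{..<m} \<times> {..<m}"]) (auto simp: strands_at_def)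
  moreover have "0 < ?h p" if "p \<in> ?P" for p
  proof -
    obtain k l where p: "p = (k, l)" by (cases p)
    then have "k \<in> strands_at m s t0 x0" "l \<in> strands_at m s t0 x0" "k \<noteq> l"
      using that by auto
    then have "s k t0 \<noteq> s l t0" using assms unfolding geom_braid_def strands_at_def by blast
    then show ?thesis using p \<open>k \<in> _\<close> \<open>l \<in> _\<close> by (auto simp: strands_at_def prod_eq_iff)
  qed
  ultimately have "\<exists>g>0. \<forall>p\<in>?P. g \<le> ?h p"
    by (rule finite_pos_lower_bound)
  then obtain g where "0 < g" "\<And>p. p \<in> ?P \<Longrightarrow> g \<le> ?h p"
    by blast
  then show thesis by (intro that[of g]) auto
qed

lemma outer_strands_apart_at_crossing:
  assumes "0 < x0"
  obtains r where "0 < r" "r < x0"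
    "\<And>j. j < m \<Longrightarrow> j \<notin> strands_at m s t0 x0 \<Longrightarrow> 2 * r \<le> \<bar>fst (s j t0) - x0\<bar>"
proof -
  let ?J = "{j. j < m \<and> j \<notin> strands_at m s t0 x0}"
  have "finite ?J" by simp
  moreover have "0 < \<bar>fst (s j t0) - x0\<bar> / 2" if "j \<in> ?J" for j
    using that by (simp add: strands_at_def)
  ultimately have "\<exists>r>0. \<forall>j\<in>?J. r \<le> \<bar>fst (s j t0) - x0\<bar> / 2"
    by (rule finite_pos_lower_bound)
  then obtain r where r: "0 < r" "\<And>j. j \<in> ?J \<Longrightarrow> r \<le> \<bar>fst (s j t0) - x0\<bar> / 2"
    by blast
  show thesis
  proof
    show "0 < min r (x0/2)" "min r (x0/2) < x0" using r(1) assms by auto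
    show "2 * min r (x0/2) \<le> \<bar>fst (s j t0) - x0\<bar>" if "j < m" "j \<notin> strands_at m s t0 x0" for j
      using r(2)[of j] that by simp
  qed
qed

lemma multi_crossing_window_exists:
  assumes reversing: "reversing_braid m s" and t0: "t0 \<in> crossing_times m s"
    and two: "2 \<le> card (strands_at m s t0 x0)"
  obtains \<epsilon> r g \<delta> where "multi_crossing_window m s t0 x0 (strands_at m s t0 x0) \<epsilon> r g \<delta>"
proof -
  let ?I = "strands_at m s t0 x0"
  have geom: "geom_braid m s" and fin: "finite (crossing_times m s)" and t0_01: "t0 \<in> {0<..<1}"
    using reversing t0 by (auto simp: reversing_braid_def)
  obtain \<epsilon> where \<epsilon>: "0 < \<epsilon>" "reverses_at m s t0 ?I \<epsilon>"
    using reversing t0 two unfolding reversing_braid_def by blast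
  have I: "k < m" "fst (s k t0) = x0" if "k \<in> ?I" for k
    using that by (simp_all add: strands_at_def)
  obtain k0 where "k0 \<in> ?I" using two by (metis two_le_cardE)
  then have "0 < x0" using geom I t0_01 by (force simp: geom_braid_def)
  then obtain r where r: "0 < r" "r < x0"
    "\<And>j. j < m \<Longrightarrow> j \<notin> ?I \<Longrightarrow> 2 * r \<le> \<bar>fst (s j t0) - x0\<bar>"
    using outer_strands_apart_at_crossing[of x0 m s t0] by blast
  have "t0 \<in> {0..1}" using t0_01 by simp
  then obtain g where g: "0 < g"
    "\<And>k l. k \<in> ?I \<Longrightarrow> l \<in> ?I \<Longrightarrow> k \<noteq> l \<Longrightarrow> g \<le> \<bar>snd (s k t0) - snd (s l t0)\<bar>"
    using heights_apart_at_crossing[OF geom, of t0 x0] by blast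
  have "0 < min (r/8) (g/4)" "0 < min \<epsilon> (min t0 (1 - t0))" using r g \<epsilon> t0_01 by auto
  then obtain \<delta> where \<delta>: "0 < \<delta>" "\<delta> < min \<epsilon> (min t0 (1 - t0))"
    and near: "\<And>t. \<bar>t - t0\<bar> \<le> \<delta> \<Longrightarrow> (\<forall>i<m. \<bar>fst (s i t) - fst (s i t0)\<bar> < min (r/8) (g/4) \<and>
      \<bar>snd (s i t) - snd (s i t0)\<bar> < min (r/8) (g/4)) \<and> (t \<noteq> t0 \<longrightarrow> t \<notin> crossing_times m s)"
    using eventually_nhds_obtain_radius[OF eventually_near_crossing[OF geom fin t0_01]] by metis
  have close: "\<bar>fst (s i t) - fst (s i t0)\<bar> < min (r/8) (g/4)" "\<bar>snd (s i t) - snd (s i t0)\<bar> < min (r/8) (g/4)"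
    if "\<bar>t - t0\<bar> \<le> \<delta>" "i < m" for t i
    using near[OF that(1)] that(2) by auto
  show thesis
  proof (rule that, unfold_locales)
    show "\<bar>fst (s k t) - x0\<bar> \<le> r/8" "\<bar>snd (s k t) - snd (s k t0)\<bar> \<le> g/4"
      if "\<bar>t - t0\<bar> \<le> \<delta>" "k \<in> ?I" for t k
      using close[OF that(1) I(1)[OF that(2)]] I(2)[OF that(2)] by auto
    show "r < \<bar>fst (s j t) - x0\<bar>" if "\<bar>t - t0\<bar> \<le> \<delta>" "j < m" "j \<notin> ?I" for t j
    proof -
      have "\<bar>fst (s j t) - fst (s j t0)\<bar> < r/8" using close(1)[OF that(1,2)] by simp
      then show ?thesis
        using r(3)[OF that(2,3)] abs_triangle_ineq4[of "fst (s j t) - x0" "fst (s j t) - fst (s j t0)"]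
          abs_ge_zero[of "fst (s j t) - fst (s j t0)"] by linarith
    qed
    show "t \<notin> crossing_times m s" if "\<bar>t - t0\<bar> \<le> \<delta>" "t \<noteq> t0" for t
      using near[OF that(1)] that(2) by blast
  qed (use reversing two \<epsilon> r g \<delta> in auto)
qed

lemma resolve_multi_crossing:
  assumes "reversing_braid m s" "(t0, x0) \<in> multi_crossings m s"
  obtains s' where "reversing_braid m s'" "multi_crossings m s' \<subset> multi_crossings m s"
    "isotopic (braid_closure m s') (braid_closure m s)"
proof -
  have "t0 \<in> crossing_times m s" "2 \<le> card (strands_at m s t0 x0)"
    using assms(2) by (auto simp: multi_crossings_def)
  then obtain \<epsilon> r g \<delta> where "multi_crossing_window m s t0 x0 (strands_at m s t0 x0) \<epsilon> r g \<delta>"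
    using multi_crossing_window_exists assms(1) by blast
  then interpret multi_crossing_window m s t0 x0 "strands_at m s t0 x0" \<epsilon> r g \<delta> .
  show thesis
    using that reversing_braid_resolved multi_crossings_resolved isotopic_resolved assms(2) by blast
qed

lemma resolve_all_multi_crossings:
  assumes "reversing_braid m s"
  obtains s' where "reversing_braid m s'" "multi_crossings m s' = {}"
    "isotopic (braid_closure m s') (braid_closure m s)"
  using assms
proof (induction "card (multi_crossings m s)" arbitrary: s thesis rule: less_induct)
  case less
  show ?case
  proof (cases "multi_crossings m s = {}")
    case True
    then show ?thesis using less.prems isotopic_refl by blast
  next
    case False
    then obtain t0 x0 where "(t0, x0) \<in> multi_crossings m s" by auto
    then obtain s1 where s1: "reversing_braid m s1" "multi_crossings m s1 \<subset> multi_crossings m s"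
      "isotopic (braid_closure m s1) (braid_closure m s)"
      using resolve_multi_crossing less.prems(2) by blast
    have "finite (multi_crossings m s)"
      using less.prems(2) by (simp add: reversing_braid_def finite_multi_crossings)
    then have "card (multi_crossings m s1) < card (multi_crossings m s)"
      using s1(2) by (rule psubset_card_mono)
    then obtain s2 where "reversing_braid m s2" "multi_crossings m s2 = {}"
      "isotopic (braid_closure m s2) (braid_closure m s1)"
      using less.hyps s1(1) by blast
    then show ?thesis using less.prems(1) s1(3) isotopic_trans by blast
  qed
qed

theorem theorem5p1:
  fixes L :: "pt3 set" and n :: nat
  assumes "is_link L" and "n \<ge> 2"
  shows "crossing_braid_index 2 L \<le> crossing_braid_index n L"
  unfolding crossing_braid_index_def
proof (rule Inf_superset_mono, rule subsetI)
  fix e assume "e \<in> {enat m |m. \<exists>s. n_crossing_braid n m s \<and> isotopic (braid_closure m s) L}"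
  then obtain m s where e: "e = enat m" and s: "n_crossing_braid n m s" "isotopic (braid_closure m s) L"
    by blast
  obtain s' where "reversing_braid m s'" "multi_crossings m s' = {}"
    "isotopic (braid_closure m s') (braid_closure m s)"
    using resolve_all_multi_crossings[OF reversing_braid_if_n_crossing_braid[OF s(1)]] .
  then have "n_crossing_braid 2 m s'" "isotopic (braid_closure m s') L"
    using n_crossing_braid_2_if_no_multi_crossings isotopic_trans s(2) by blast+
  then show "e \<in> {enat m |m. \<exists>s. n_crossing_braid 2 m s \<and> isotopic (braid_closure m s) L}"
    using e by blast
qed

end
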